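(* For every $\boldsymbol{\phi}\in L^\infty(\Omega)^K$ and every $\lambda>0$, the functional $\mathcal{R}_{\boldsymbol{\phi},\lambda}$ admits at least one global minimizer in $\mathrm{BV}(\Omega)^K$ (and hence, for any minimizer $\boldsymbol{u}^\lambda$ and any $(\boldsymbol{a}^\lambda,\boldsymbol{b}^\lambda)$ minimizing $\mathcal{D}_{\boldsymbol{\phi}}(\boldsymbol{u}^\lambda,\cdot,\cdot)$, the triple $(\boldsymbol{u}^\lambda,\boldsymbol{a}^\lambda,\boldsymbol{b}^\lambda)$ is a global minimizer of $\mathcal{E}_{\boldsymbol{\phi};\lambda}$).
   Context: $\Omega\subseteq\mathbb{R}^2$ is a bounded domain with Lipschitz boundary, $K\ge1$. $\mathrm{BV}(\Omega)$ is the space of $L^1$ functions of bounded total variation $|u|_{\mathrm{TV}}$. $\mathbb A=\{\boldsymbol{u}\in\mathrm{BV}(\Omega)^K \mid u_k\ge 0\ \forall k,\ \sum_{k=1}^K u_k\le 1\}$, $i_{\mathbb A}$ its indicator function ($0$ on $\mathbb A$, $+\infty$ outside), $\mathcal{Q}(\boldsymbol{u})=\sum_{k=1}^K|u_k|_{\mathrm{TV}}$. For $\boldsymbol{\phi}=(\phi_k)\in L^\infty(\Omega)^K$, $\boldsymbol{a},\boldsymbol{b}\in\mathbb{R}^K$: $\mathcal{D}_{\boldsymbol{\phi}}(\boldsymbol{u},\boldsymbol{a},\boldsymbol{b})=\sum_{k=1}^K\int_\Omega (a_k-\phi_k)^2u_k+(b_k-\phi_k)^2(1-u_k)$, $\mathcal{E}_{\boldsymbol{\phi};\lambda}(\boldsymbol{u},\boldsymbol{a},\boldsymbol{b})=i_{\mathbb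 A}(\boldsymbol{u})+\lambda\mathcal{Q}(\boldsymbol{u})+\mathcal{D}_{\boldsymbol{\phi}}(\boldsymbol{u},\boldsymbol{a},\boldsymbol{b})$, and $\mathcal{R}_{\boldsymbol{\phi},\lambda}(\boldsymbol{u})=\lambda\mathcal{Q}(\boldsymbol{u})+\inf_{(\boldsymbol{a},\boldsymbol{b})\in\mathbb{R}^{2K}}\mathcal{D}_{\boldsymbol{\phi}}(\boldsymbol{u},\boldsymbol{a},\boldsymbol{b})$ if $\boldsymbol{u}\in\mathbb A$ and $+\infty$ otherwise. *)

theory Defs
  imports "HOL-Analysis.Analysis"
begin

type_synonym R2 = "real^2"

definition bounded_domain :: "R2 set \<Rightarrow> bool" where
  "bounded_domain \<Omega> \<longleftrightarrow> open \<Omega> \<and> connected \<Omega> \<and> bounded \<Omega> \<and> \<Omega> \<noteq> {}"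

text \<open>Locally, after a rigid motion, the domain is the subgraph of a Lipschitz function.\<close>
definition lipschitz_boundary :: "R2 set \<Rightarrow> bool" where
  "lipschitz_boundary \<Omega> \<longleftrightarrow>
     (\<forall>p\<in>frontier \<Omega>. \<exists>r>0. \<exists>T::R2 \<Rightarrow> R2. orthogonal_transformation T \<and>
        (\<exists>(\<gamma>::real \<Rightarrow> real) L. (\<forall>s t. \<bar>\<gamma> s - \<gamma> t\<bar> \<le> L * \<bar>s - t\<bar>) \<and>
           \<Omega> \<inter> ball p r = {y \<in> ball p r. (T (y - p)) $ 2 < \<gamma> ((T (y - p)) $ 1)}))"

definition test_fields :: "R2 set \<Rightarrow> (R2 \<Rightarrow> R2) set" where
  "test_fields \<Omega> = {g. (\<forall>x. g differentiable (at x)) \<and>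
      (\<forall>i\<in>Basis. continuous_on UNIV (\<lambda>x. frechet_derivative g (at x) i)) \<and>
      compact (closure {x. g x \<noteq> 0}) \<and> closure {x. g x \<noteq> 0} \<subseteq> \<Omega> \<and>
      (\<forall>x. norm (g x) \<le> 1)}"

definition divergence :: "(R2 \<Rightarrow> R2) \<Rightarrow> R2 \<Rightarrow> real" where
  "divergence g x = (\<Sum>i\<in>Basis. frechet_derivative g (at x) i \<bullet> i)"

definition TV :: "R2 set \<Rightarrow> (R2 \<Rightarrow> real) \<Rightarrow> ereal" where
  "TV \<Omega> u = (SUP g\<in>test_fields \<Omega>. ereal (LINT x:\<Omega>|lebesgue. u x * divergence g x))"

definition BV :: "R2 set \<Rightarrow> (R2 \<Rightarrow> real) set" where
  "BV \<Omega> = {u. set_integrable lebesgue \<Omega> u \<and> TV \<Omega> u < \<infinity>}"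

definition Linfty :: "R2 set \<Rightarrow> (R2 \<Rightarrow> real) set" where
  "Linfty \<Omega> = {f. set_borel_measurable lebesgue \<Omega> f \<and>
                   (\<exists>C. AE x in lebesgue. x \<in> \<Omega> \<longrightarrow> \<bar>f x\<bar> \<le> C)}"

text \<open>Vector fields u = (u_0,...,u_{K-1}) are functions nat => R2 => real; only k < K matter.\<close>
definition admissible :: "R2 set \<Rightarrow> nat \<Rightarrow> (nat \<Rightarrow> R2 \<Rightarrow> real) set" where
  "admissible \<Omega> K = {u. (\<forall>k<K. u k \<in> BV \<Omega>) \<and>
      (AE x in lebesgue. x \<in> \<Omega> \<longrightarrow> (\<forall>k<K. u k x \<ge> 0) \<and> (\<Sum>k<K. u k x) \<le> 1)}"

definition Qf :: "R2 set \<Rightarrow> nat \<Rightarrow> (nat \<Rightarrow> R2 \<Rightarrow> real) \<Rightarrow> ereal" where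
  "Qf \<Omega> K u = (\<Sum>k<K. TV \<Omega> (u k))"

definition Df :: "R2 set \<Rightarrow> nat \<Rightarrow> (nat \<Rightarrow> R2 \<Rightarrow> real) \<Rightarrow> (nat \<Rightarrow> R2 \<Rightarrow> real)
                   \<Rightarrow> (nat \<Rightarrow> real) \<Rightarrow> (nat \<Rightarrow> real) \<Rightarrow> real" where
  "Df \<Omega> K \<phi> u a b = (\<Sum>k<K. LINT x:\<Omega>|lebesgue.
        (a k - \<phi> k x)^2 * u k x + (b k - \<phi> k x)^2 * (1 - u k x))"

definition Ef :: "R2 set \<Rightarrow> nat \<Rightarrow> (nat \<Rightarrow> R2 \<Rightarrow> real) \<Rightarrow> real
                   \<Rightarrow> (nat \<Rightarrow> R2 \<Rightarrow> real) \<Rightarrow> (nat \<Rightarrow> real) \<Rightarrow> (nat \<Rightarrow> real) \<Rightarrow> ereal" where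
  "Ef \<Omega> K \<phi> lam u a b =
     (if u \<in> admissible \<Omega> K then ereal lam * Qf \<Omega> K u + ereal (Df \<Omega> K \<phi> u a b) else \<infinity>)"

definition Rf :: "R2 set \<Rightarrow> nat \<Rightarrow> (nat \<Rightarrow> R2 \<Rightarrow> real) \<Rightarrow> real
                   \<Rightarrow> (nat \<Rightarrow> R2 \<Rightarrow> real) \<Rightarrow> ereal" where
  "Rf \<Omega> K \<phi> lam u =
     (if u \<in> admissible \<Omega> K
      then ereal lam * Qf \<Omega> K u + ereal (Inf {Df \<Omega> K \<phi> u a b | a b. True})
      else \<infinity>)"

end

theory Submission
  imports Defs "HOL-Library.Diagonal_Subsequence"
begin

text \<open>
  The direct method. Let \<open>M\<close> bound the data \<open>\<phi>\<close>. Clamping the constants \<open>a, b\<close> to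
  \<open>[-M, M]\<close> never increases the data term, so along a minimizing sequence the constants stay
  bounded, and the total variations are bounded by (infimum + 1) / \<open>\<lambda>\<close>. Components of
  admissible fields take values in \<open>[0, 1]\<close>; a diagonal argument over the finite unions of a
  countable basis, which approximate every measurable set in measure, yields a subsequence whose
  integrals over every measurable set converge. The limit set function is dominated by Lebesgue
  measure, so by Radon--Nikodym it has a \<open>[0, 1]\<close>-valued density. This setwise convergence
  implies convergence against every integrable function, which makes the data term continuous and
  the total variation -- a supremum of integrals against divergences of test fields -- lower
  semicontinuous; the pointwise constraints pass to the limit as well. Finally, for a minimizer
  \<open>u\<close> of the reduced functional and optimal constants, \<open>E(u, a, b) = R(u) \<le> R(v) \<le> E(v, a', b')\<close>.
\<close>

section \<open>Diagonal subsequences\<close>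

lemma bounded_seqs_common_convergent_subseq:
  fixes X :: "'i \<Rightarrow> nat \<Rightarrow> 'a::heine_borel"
  assumes I: "countable I" and bdd: "\<And>i. i \<in> I \<Longrightarrow> bounded (range (X i))"
  shows "\<exists>d. strict_mono d \<and> (\<forall>i\<in>I. convergent (\<lambda>n. X i (d n)))"
proof (cases "I = {}")
  case True
  show ?thesis unfolding True using strict_mono_id by auto
next
  case False
  define Y where "Y j = X (from_nat_into I j)" for j
  interpret subseqs "\<lambda>j s. convergent (Y j \<circ> s)"
  proof
    fix j and s :: "nat \<Rightarrow> nat"
    have "range (Y j \<circ> s) \<subseteq> range (Y j)" by auto
    then have "bounded (range (Y j \<circ> s))"
      using bdd[OF from_nat_into[OF False]] Y_def bounded_subset by metis
    then obtain r l where "strict_mono r" "(Y j \<circ> s \<circ> r) \<longlonglongrightarrow> l"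
      using bounded_imp_convergent_subsequence by blast
    then show "\<exists>r. strict_mono r \<and> convergent (Y j \<circ> (s \<circ> r))"
      by (auto simp: convergent_def comp_assoc)
  qed
  have "convergent (\<lambda>n. Y j (diagseq n))" for j
  proof -
    have "convergent (Y j \<circ> (diagseq \<circ> (+) (Suc j)))"
      by (rule diagseq_holds) (simp add: comp_assoc[symmetric] convergent_subseq_convergent)
    then obtain L where "(\<lambda>n. Y j (diagseq (n + Suc j))) \<longlonglongrightarrow> L"
      by (auto simp: convergent_def o_def add.commute)
    then have "(\<lambda>n. Y j (diagseq n)) \<longlonglongrightarrow> L"
      by (rule LIMSEQ_offset)
    then show ?thesis
      by (auto simp: convergent_def)
  qed
  moreover have "\<exists>j. i = from_nat_into I j" if "i \<in> I" for i
    using from_nat_into_surj[OF I that] by metis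
  ultimately have "\<forall>i\<in>I. convergent (\<lambda>n. X i (diagseq n))"
    unfolding Y_def by metis
  then show ?thesis
    using subseq_diagseq by blast
qed

lemma bounded_families_common_convergent_subseq:
  fixes F :: "(nat \<Rightarrow> 'i \<Rightarrow> real) set"
  assumes F: "finite F" and I: "countable I" and bnd: "\<And>f n i. f \<in> F \<Longrightarrow> i \<in> I \<Longrightarrow> \<bar>f n i\<bar> \<le> B"
  shows "\<exists>d. strict_mono d \<and> (\<forall>f\<in>F. \<forall>i\<in>I. convergent (\<lambda>n. f (d n) i))"
proof -
  define X where "X = (\<lambda>(f :: nat \<Rightarrow> 'i \<Rightarrow> real, i) n. f n i)"
  have "bounded (range (X j))" if "j \<in> F \<times> I" for j
    using that bnd unfolding X_def bounded_iff by (intro exI[of _ B]) auto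
  moreover have "countable (F \<times> I)"
    using countable_finite[OF F] I by (rule countable_SIGMA)
  ultimately obtain d where "strict_mono d" "\<forall>j\<in>F \<times> I. convergent (\<lambda>n. X j (d n))"
    using bounded_seqs_common_convergent_subseq[of "F \<times> I" X] by meson
  then show ?thesis unfolding X_def by auto
qed

section \<open>Approximating Lebesgue measurable sets\<close>

definition finite_unions :: "'a set set \<Rightarrow> 'a set set" where
  "finite_unions Bs = Union ` {F. finite F \<and> F \<subseteq> Bs}"

lemma countable_finite_unions: "countable Bs \<Longrightarrow> countable (finite_unions Bs)"
  unfolding finite_unions_def using countable_Collect_finite_subset by blast

lemma open_finite_unions: "topological_basis Bs \<Longrightarrow> B \<in> finite_unions Bs \<Longrightarrow> open B"
  unfolding finite_unions_def topological_basis_def by (auto intro!: open_Union)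

lemma open_eq_incseq_finite_unions:
  assumes Bs: "topological_basis Bs" "countable Bs" and T: "open T"
  obtains A where "incseq A" "\<And>i. A i \<in> finite_unions Bs" "(\<Union>i. A i) = T"
proof -
  obtain B' where B': "B' \<subseteq> Bs" "\<Union>B' = T"
    using Bs T unfolding topological_basis_def by blast
  have empty: "{} \<in> finite_unions Bs" unfolding finite_unions_def by (auto intro!: image_eqI[of _ _ "{}"])
  show ?thesis
  proof (cases "B' = {}")
    case True
    then show ?thesis using that[of "\<lambda>i. {}"] empty B' by (simp add: incseq_def)
  next
    case False
    define A where "A i = \<Union>(from_nat_into B' ` {..<i})" for i
    have "countable B'" using B' Bs(2) countable_subset by blast
    then have rf: "range (from_nat_into B') = B'"
      using False by (simp add: range_from_nat_into)
    have "incseq A"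
      unfolding A_def incseq_def by auto (meson lessThan_iff order_less_le_trans)
    moreover have "A i \<in> finite_unions Bs" for i
      unfolding finite_unions_def A_def using rf B' by auto
    moreover have "(\<Union>i. A i) = T"
    proof
      show "T \<subseteq> (\<Union>i. A i)"
      proof
        fix x assume "x \<in> T"
        then obtain i where "x \<in> from_nat_into B' i" using B' rf by (metis Union_iff rangeE)
        then show "x \<in> (\<Union>i. A i)" unfolding A_def by (auto intro!: exI[of _ "Suc i"])
      qed
    qed (use rf B' in \<open>auto simp: A_def\<close>)
    ultimately show ?thesis by (rule that)
  qed
qed

lemma open_approx_from_inside_by_finite_unions:
  fixes T :: "'a::euclidean_space set"
  assumes Bs: "topological_basis Bs" "countable Bs" and T: "open T" "T \<in> lmeasurable" and e: "e > 0"
  shows "\<exists>B\<in>finite_unions Bs. B \<subseteq> T \<and> B \<in> lmeasurable \<and> measure lebesgue (T - B) < e"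
proof -
  obtain A where A: "incseq A" "\<And>i. A i \<in> finite_unions Bs" and UA: "(\<Union>i. A i) = T"
    using open_eq_incseq_finite_unions[OF Bs T(1)] by blast
  have AT: "A i \<subseteq> T" for i using UA by blast
  have Am: "A i \<in> lmeasurable" for i
  proof -
    have "A i \<in> sets lebesgue" using open_finite_unions[OF Bs(1) A(2)] by (simp add: borel_open)
    then show ?thesis using AT T(2) by (meson fmeasurableI2)
  qed
  have "range A \<subseteq> sets lebesgue" using Am by (auto simp: fmeasurable_def)
  moreover have "emeasure lebesgue (\<Union>i. A i) \<noteq> \<infinity>"
    unfolding UA using fmeasurableD2[OF T(2)] by (metis infinity_ennreal_def)
  ultimately have "(\<lambda>i. measure lebesgue (A i)) \<longlonglongrightarrow> measure lebesgue T"
    using Lim_measure_incseq[of A lebesgue] A(1) UA by simp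
  then obtain i where i: "\<bar>measure lebesgue (A i) - measure lebesgue T\<bar> < e"
    using e unfolding LIMSEQ_iff real_norm_def by (meson order_refl)
  have "measure lebesgue (T - A i) = measure lebesgue T - measure lebesgue (A i)"
    using T(2) Am AT by (intro measure_Diff) (auto simp: fmeasurable_def)
  then show ?thesis using i A(2) AT Am by (intro bexI[of _ "A i"]) auto
qed

lemma lmeasurable_approx_by_finite_unions:
  fixes S :: "'a::euclidean_space set"
  assumes Bs: "topological_basis Bs" "countable Bs" and S: "S \<in> lmeasurable" and e: "e > 0"
  shows "\<exists>B\<in>finite_unions Bs. B \<in> lmeasurable \<and> measure lebesgue (sym_diff S B) < e"
proof -
  obtain T where T: "open T" "S \<subseteq> T" "T - S \<in> lmeasurable" "emeasure lebesgue (T - S) < ennreal (e/2)"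
    using sets_lebesgue_outer_open[of S "e/2"] S e by (auto simp: fmeasurable_def)
  have Tm: "T \<in> lmeasurable"
    using fmeasurable.Un[OF S T(3)] T(2) by (simp add: Un_absorb1)
  have TS: "measure lebesgue (T - S) < e/2"
    using T(3,4) e by (simp add: emeasure_eq_measure2 ennreal_less_iff)
  obtain B where B: "B \<in> finite_unions Bs" "B \<subseteq> T" "B \<in> lmeasurable" "measure lebesgue (T - B) < e/2"
    using open_approx_from_inside_by_finite_unions[OF Bs T(1) Tm, of "e/2"] e by auto
  have "sym_diff S B \<subseteq> (T - S) \<union> (T - B)"
    using T(2) B(2) by auto
  then have "measure lebesgue (sym_diff S B) \<le> measure lebesgue ((T - S) \<union> (T - B))"
    using Tm B(3) S T(3) by (intro measure_mono_fmeasurable) auto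
  also have "\<dots> \<le> measure lebesgue (T - S) + measure lebesgue (T - B)"
    using Tm B(3) T(3) by (intro measure_Un_le) auto
  finally show ?thesis using TS B by auto
qed

lemma sigma_finite_lebesgue: "sigma_finite_measure (lebesgue :: 'a::euclidean_space measure)"
proof
  let ?A = "range (\<lambda>n::nat. ball (0::'a) (real n))"
  have "\<Union>?A = space lebesgue"
    by (auto simp: dist_norm) (meson reals_Archimedean2)
  moreover have "\<forall>a\<in>?A. emeasure lebesgue a \<noteq> \<infinity>"
    using fmeasurableD2[OF lmeasurable_ball] by (auto simp: infinity_ennreal_def)
  ultimately show "\<exists>A::'a set set. countable A \<and> A \<subseteq> sets lebesgue \<and> \<Union>A = space lebesgue \<and>
      (\<forall>a\<in>A. emeasure lebesgue a \<noteq> \<infinity>)"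
    by (intro exI[of _ ?A]) (auto simp: borel_open)
qed

lemma AE_nonneg_if_set_integrals_nonneg:
  fixes u :: "'a::euclidean_space \<Rightarrow> real"
  assumes u: "set_integrable lebesgue \<Omega> u"
    and nonneg: "\<And>A. A \<in> sets lebesgue \<Longrightarrow> 0 \<le> (LINT x:A\<inter>\<Omega>|lebesgue. u x)"
  shows "AE x in lebesgue. x \<in> \<Omega> \<longrightarrow> 0 \<le> u x"
proof -
  have "AE x in lebesgue. 0 \<le> indicator \<Omega> x * u x"
  proof (rule sigma_finite_measure.density_nonneg[OF sigma_finite_lebesgue])
    show "integrable lebesgue (\<lambda>x. indicator \<Omega> x * u x)"
      using u by (simp add: set_integrable_def)
    fix A :: "'a set" assume "A \<in> sets lebesgue"
    then show "0 \<le> set_lebesgue_integral lebesgue A (\<lambda>x. indicator \<Omega> x * u x)"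
      using nonneg unfolding set_lebesgue_integral_def by (simp add: indicator_inter_arith mult_ac)
  qed
  then show ?thesis by eventually_elim (auto simp: indicator_def)
qed

lemma set_integral_one_lmeasurable:
  "A \<in> lmeasurable \<Longrightarrow> (LINT x:A|lebesgue. 1::real) = measure lebesgue A"
  using set_integral_const[of A lebesgue "1::real"]
  by (metis fmeasurableD fmeasurableD2 infinity_ennreal_def mult.right_neutral real_scaleR_def)

lemma countably_additive_if_dominated:
  fixes \<nu> :: "'a set \<Rightarrow> real"
  assumes \<Omega>: "\<Omega> \<in> sets M" "emeasure M \<Omega> \<noteq> \<infinity>"
    and add: "\<And>A B. A \<in> sets M \<Longrightarrow> B \<in> sets M \<Longrightarrow> A \<inter> B = {} \<Longrightarrow> \<nu> (A \<union> B) = \<nu> A + \<nu> B"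
    and bnd: "\<And>A. A \<in> sets M \<Longrightarrow> 0 \<le> \<nu> A \<and> \<nu> A \<le> measure M (A \<inter> \<Omega>)"
  shows "countably_additive (sets M) (\<lambda>A. ennreal (\<nu> A))"
proof (rule sets.empty_continuous_imp_countably_additive)
  show "positive (sets M) (\<lambda>A. ennreal (\<nu> A))"
    using bnd[of "{}"] by (simp add: positive_def)
  show "additive (sets M) (\<lambda>A. ennreal (\<nu> A))"
    using add bnd by (simp add: additive_def ennreal_plus)
  show "\<forall>A\<in>sets M. ennreal (\<nu> A) \<noteq> \<infinity>" by simp
  fix A :: "nat \<Rightarrow> 'a set" assume A: "range A \<subseteq> sets M" "decseq A" "(\<Inter>i. A i) = {}"
  have "(\<lambda>i. measure M (A i \<inter> \<Omega>)) \<longlonglongrightarrow> measure M (\<Inter>i. A i \<inter> \<Omega>)"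
  proof (rule Lim_measure_decseq)
    show "range (\<lambda>i. A i \<inter> \<Omega>) \<subseteq> sets M" using A(1) \<Omega>(1) by auto
    show "decseq (\<lambda>i. A i \<inter> \<Omega>)" using A(2) unfolding decseq_def by auto
    show "emeasure M (A i \<inter> \<Omega>) \<noteq> \<infinity>" for i
      using emeasure_mono[of "A i \<inter> \<Omega>" \<Omega> M] \<Omega> by (auto simp: top_unique)
  qed
  moreover have "(\<Inter>i. A i \<inter> \<Omega>) = {}" using A(3) by auto
  ultimately have lim0: "(\<lambda>i. measure M (A i \<inter> \<Omega>)) \<longlonglongrightarrow> 0" by (metis measure_empty)
  have "(\<lambda>i. \<nu> (A i)) \<longlonglongrightarrow> 0"
  proof (rule real_tendsto_sandwich[OF _ _ tendsto_const lim0])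
    show "\<forall>\<^sub>F i in sequentially. 0 \<le> \<nu> (A i)"
      using A(1) bnd by (intro always_eventually) blast
    show "\<forall>\<^sub>F i in sequentially. \<nu> (A i) \<le> measure M (A i \<inter> \<Omega>)"
      using A(1) bnd by (intro always_eventually) blast
  qed
  then show "(\<lambda>i. ennreal (\<nu> (A i))) \<longlonglongrightarrow> 0"
    using tendsto_ennrealI by fastforce
qed

section \<open>Bounded measurable functions on the domain\<close>

lemma Linfty_set_integrable:
  assumes "\<Omega> \<in> lmeasurable" "f \<in> Linfty \<Omega>"
  shows "set_integrable lebesgue \<Omega> f"
proof -
  from assms(2) obtain C where m: "set_borel_measurable lebesgue \<Omega> f"
    and C: "AE x in lebesgue. x \<in> \<Omega> \<longrightarrow> \<bar>f x\<bar> \<le> C" unfolding Linfty_def by blast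
  show ?thesis unfolding set_integrable_def
    by (rule integrableI_bounded_set[where A=\<Omega> and B=C])
      (use assms(1) m C in \<open>auto simp: set_borel_measurable_def fmeasurable_def\<close>)
qed

lemma Linfty_const: "\<Omega> \<in> sets lebesgue \<Longrightarrow> (\<lambda>x. c) \<in> Linfty \<Omega>"
  unfolding Linfty_def set_borel_measurable_def by (auto intro!: exI[of _ "\<bar>c\<bar>"])

lemma Linfty_measurable:
  "f \<in> Linfty \<Omega> \<Longrightarrow> (\<lambda>x. indicator \<Omega> x * f x) \<in> borel_measurable lebesgue"
  unfolding Linfty_def set_borel_measurable_def by simp

lemma Linfty_add:
  assumes "f \<in> Linfty \<Omega>" "g \<in> Linfty \<Omega>"
  shows "(\<lambda>x. f x + g x) \<in> Linfty \<Omega>"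
proof -
  from assms obtain C D where C: "AE x in lebesgue. x \<in> \<Omega> \<longrightarrow> \<bar>f x\<bar> \<le> C"
    and D: "AE x in lebesgue. x \<in> \<Omega> \<longrightarrow> \<bar>g x\<bar> \<le> D"
    unfolding Linfty_def by blast
  have "(\<lambda>x. indicator \<Omega> x * (f x + g x)) = (\<lambda>x. indicator \<Omega> x * f x + indicator \<Omega> x * g x)"
    by (auto simp: algebra_simps)
  then have "set_borel_measurable lebesgue \<Omega> (\<lambda>x. f x + g x)"
    using assms[THEN Linfty_measurable] unfolding set_borel_measurable_def by simp
  moreover have "AE x in lebesgue. x \<in> \<Omega> \<longrightarrow> \<bar>f x + g x\<bar> \<le> C + D"
    using C D by eventually_elim auto
  ultimately show ?thesis unfolding Linfty_def by blast
qed

lemma Linfty_mult: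
  assumes "f \<in> Linfty \<Omega>" "g \<in> Linfty \<Omega>"
  shows "(\<lambda>x. f x * g x) \<in> Linfty \<Omega>"
proof -
  from assms obtain C D where C: "AE x in lebesgue. x \<in> \<Omega> \<longrightarrow> \<bar>f x\<bar> \<le> C"
    and D: "AE x in lebesgue. x \<in> \<Omega> \<longrightarrow> \<bar>g x\<bar> \<le> D"
    unfolding Linfty_def by blast
  have "(\<lambda>x. indicator \<Omega> x * (f x * g x)) = (\<lambda>x. (indicator \<Omega> x * f x) * (indicator \<Omega> x * g x))"
    by (auto simp: indicator_def)
  then have "set_borel_measurable lebesgue \<Omega> (\<lambda>x. f x * g x)"
    using assms[THEN Linfty_measurable] unfolding set_borel_measurable_def by simp
  moreover have "AE x in lebesgue. x \<in> \<Omega> \<longrightarrow> \<bar>f x * g x\<bar> \<le> C * D"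
    using C D by eventually_elim (auto simp: abs_mult intro: mult_mono)
  ultimately show ?thesis unfolding Linfty_def by blast
qed

lemma Linfty_diff:
  assumes "\<Omega> \<in> sets lebesgue" "f \<in> Linfty \<Omega>" "g \<in> Linfty \<Omega>"
  shows "(\<lambda>x. f x - g x) \<in> Linfty \<Omega>"
  using Linfty_add[OF assms(2) Linfty_mult[OF Linfty_const[OF assms(1), of "-1"] assms(3)]] by simp

lemma Linfty_sum:
  "\<Omega> \<in> sets lebesgue \<Longrightarrow> (\<And>i. i \<in> I \<Longrightarrow> f i \<in> Linfty \<Omega>) \<Longrightarrow> (\<lambda>x. \<Sum>i\<in>I. f i x) \<in> Linfty \<Omega>"
  by (induct I rule: infinite_finite_induct) (auto intro: Linfty_add Linfty_const)

lemma Linfty_finite_family_bound: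
  assumes I: "finite I" and f: "\<And>i. i \<in> I \<Longrightarrow> f i \<in> Linfty \<Omega>"
  shows "\<exists>M\<ge>0. \<forall>i\<in>I. AE x in lebesgue. x \<in> \<Omega> \<longrightarrow> \<bar>f i x\<bar> \<le> M"
proof -
  have "\<forall>i\<in>I. \<exists>C. AE x in lebesgue. x \<in> \<Omega> \<longrightarrow> \<bar>f i x\<bar> \<le> C"
    using f unfolding Linfty_def by blast
  then obtain C where C: "\<And>i. i \<in> I \<Longrightarrow> AE x in lebesgue. x \<in> \<Omega> \<longrightarrow> \<bar>f i x\<bar> \<le> C i"
    by (metis bchoice)
  have "AE x in lebesgue. x \<in> \<Omega> \<longrightarrow> \<bar>f i x\<bar> \<le> (\<Sum>i\<in>I. \<bar>C i\<bar>)" if "i \<in> I" for i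
  proof -
    have le: "\<bar>C i\<bar> \<le> (\<Sum>i\<in>I. \<bar>C i\<bar>)" using I that by (intro member_le_sum) auto
    show ?thesis using C[OF that] by eventually_elim (use le in auto)
  qed
  then show ?thesis by (intro exI[of _ "\<Sum>i\<in>I. \<bar>C i\<bar>"]) (auto intro: sum_nonneg)
qed

definition Linfty_ball :: "R2 set \<Rightarrow> (R2 \<Rightarrow> real) set" where
  "Linfty_ball \<Omega> = {w \<in> Linfty \<Omega>. AE x in lebesgue. x \<in> \<Omega> \<longrightarrow> \<bar>w x\<bar> \<le> 1}"

definition Linfty_01 :: "R2 set \<Rightarrow> (R2 \<Rightarrow> real) set" where
  "Linfty_01 \<Omega> = {w \<in> Linfty \<Omega>. AE x in lebesgue. x \<in> \<Omega> \<longrightarrow> 0 \<le> w x \<and> w x \<le> 1}"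

lemma Linfty_01_subset_ball: "Linfty_01 \<Omega> \<subseteq> Linfty_ball \<Omega>"
  unfolding Linfty_01_def Linfty_ball_def by (auto elim!: eventually_mono)

lemma Linfty_01_iff:
  "w \<in> Linfty_01 \<Omega> \<longleftrightarrow> set_borel_measurable lebesgue \<Omega> w \<and>
     (AE x in lebesgue. x \<in> \<Omega> \<longrightarrow> 0 \<le> w x \<and> w x \<le> 1)"
  unfolding Linfty_01_def Linfty_def by (auto 4 3 elim!: eventually_mono)

lemma Linfty_ball_integrable:
  assumes w: "w \<in> Linfty_ball \<Omega>" and g: "integrable lebesgue g"
  shows "integrable lebesgue (\<lambda>x. indicator \<Omega> x * w x * g x)"
proof (rule Bochner_Integration.integrable_bound[OF g])
  show "(\<lambda>x. indicator \<Omega> x * w x * g x) \<in> borel_measurable lebesgue"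
    using w g by (auto simp: Linfty_ball_def dest!: Linfty_measurable)
  have "AE x in lebesgue. x \<in> \<Omega> \<longrightarrow> \<bar>w x\<bar> \<le> 1" using w by (simp add: Linfty_ball_def)
  then show "AE x in lebesgue. norm (indicator \<Omega> x * w x * g x) \<le> norm (g x)"
    by eventually_elim (auto simp: indicator_def abs_mult intro: mult_left_le_one_le)
qed

lemma Linfty_ball_integral_diff_le:
  assumes w: "w \<in> Linfty_ball \<Omega>" and f: "integrable lebesgue f" and g: "integrable lebesgue g"
  shows "\<bar>(\<integral>x. indicator \<Omega> x * w x * f x \<partial>lebesgue) - (\<integral>x. indicator \<Omega> x * w x * g x \<partial>lebesgue)\<bar>
     \<le> (\<integral>x. \<bar>f x - g x\<bar> \<partial>lebesgue)"
proof -
  have fg: "integrable lebesgue (\<lambda>x. f x - g x)" using f g by auto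
  have "(\<integral>x. indicator \<Omega> x * w x * f x \<partial>lebesgue) - (\<integral>x. indicator \<Omega> x * w x * g x \<partial>lebesgue)
     = (\<integral>x. indicator \<Omega> x * w x * (f x - g x) \<partial>lebesgue)"
    using Linfty_ball_integrable[OF w f] Linfty_ball_integrable[OF w g]
    by (subst Bochner_Integration.integral_diff[symmetric]) (auto simp: algebra_simps)
  also have "\<bar>\<dots>\<bar> \<le> (\<integral>x. \<bar>indicator \<Omega> x * w x * (f x - g x)\<bar> \<partial>lebesgue)"
    using integral_norm_bound[of lebesgue "\<lambda>x. indicator \<Omega> x * w x * (f x - g x)"] by simp
  also have "\<dots> \<le> (\<integral>x. \<bar>f x - g x\<bar> \<partial>lebesgue)"
  proof (rule integral_mono_AE)
    show "integrable lebesgue (\<lambda>x. \<bar>indicator \<Omega> x * w x * (f x - g x)\<bar>)"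
      using Linfty_ball_integrable[OF w fg] by auto
    show "integrable lebesgue (\<lambda>x. \<bar>f x - g x\<bar>)" using fg by auto
    have "AE x in lebesgue. x \<in> \<Omega> \<longrightarrow> \<bar>w x\<bar> \<le> 1" using w by (simp add: Linfty_ball_def)
    then show "AE x in lebesgue. \<bar>indicator \<Omega> x * w x * (f x - g x)\<bar> \<le> \<bar>f x - g x\<bar>"
      by eventually_elim (auto simp: indicator_def abs_mult intro: mult_left_le_one_le)
  qed
  finally show ?thesis .
qed

lemma Linfty_ball_set_integral_diff_le:
  assumes \<Omega>: "\<Omega> \<in> lmeasurable" and w: "w \<in> Linfty_ball \<Omega>"
    and S: "S \<in> sets lebesgue" and T: "T \<in> sets lebesgue"
  shows "\<bar>(LINT x:S\<inter>\<Omega>|lebesgue. w x) - (LINT x:T\<inter>\<Omega>|lebesgue. w x)\<bar>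
     \<le> measure lebesgue (sym_diff S T \<inter> \<Omega>)"
proof -
  have Im: "A \<inter> \<Omega> \<in> lmeasurable" if "A \<in> sets lebesgue" for A
    using that \<Omega> by (metis fmeasurable_Int_fmeasurable inf_commute)
  have ind: "integrable lebesgue (indicator (A \<inter> \<Omega>) :: R2 \<Rightarrow> real)" if "A \<in> sets lebesgue" for A
    using Im[OF that] by (intro integrable_real_indicator) (auto simp: fmeasurable_def)
  have "(LINT x:S\<inter>\<Omega>|lebesgue. w x) - (LINT x:T\<inter>\<Omega>|lebesgue. w x)
      = (\<integral>x. indicator \<Omega> x * w x * indicator (S \<inter> \<Omega>) x \<partial>lebesgue)
        - (\<integral>x. indicator \<Omega> x * w x * indicator (T \<inter> \<Omega>) x \<partial>lebesgue)"
    unfolding set_lebesgue_integral_def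
    by (intro arg_cong2[where f=minus] Bochner_Integration.integral_cong) (auto simp: indicator_def)
  also have "\<bar>\<dots>\<bar> \<le> (\<integral>x. \<bar>indicator (S \<inter> \<Omega>) x - indicator (T \<inter> \<Omega>) x\<bar> \<partial>lebesgue)"
    using S T by (intro Linfty_ball_integral_diff_le w ind)
  also have "\<dots> = (\<integral>x. indicator (sym_diff S T \<inter> \<Omega>) x \<partial>lebesgue)"
    by (intro Bochner_Integration.integral_cong) (auto simp: indicator_def)
  also have "\<dots> = measure lebesgue (sym_diff S T \<inter> \<Omega>)"
    using Im[of "sym_diff S T"] S T by (simp add: fmeasurable_def)
  finally show ?thesis .
qed

lemma Linfty_01_set_integral_bounds:
  assumes \<Omega>: "\<Omega> \<in> lmeasurable" and w: "w \<in> Linfty_01 \<Omega>" and A: "A \<in> sets lebesgue"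
  shows "0 \<le> (LINT x:A\<inter>\<Omega>|lebesgue. w x) \<and> (LINT x:A\<inter>\<Omega>|lebesgue. w x) \<le> measure lebesgue (A \<inter> \<Omega>)"
proof
  have w01: "AE x in lebesgue. x \<in> \<Omega> \<longrightarrow> 0 \<le> w x \<and> w x \<le> 1" using w by (simp add: Linfty_01_def)
  have Im: "A \<inter> \<Omega> \<in> lmeasurable" using A \<Omega> by (metis fmeasurable_Int_fmeasurable inf_commute)
  show "0 \<le> (LINT x:A\<inter>\<Omega>|lebesgue. w x)"
    unfolding set_lebesgue_integral_def
    by (rule integral_nonneg_AE) (use w01 in \<open>eventually_elim, auto simp: indicator_def\<close>)
  have "(LINT x:A\<inter>\<Omega>|lebesgue. w x) \<le> (\<integral>x. indicator (A \<inter> \<Omega>) x \<partial>lebesgue)"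
    unfolding set_lebesgue_integral_def
  proof (rule integral_mono_AE)
    have "set_integrable lebesgue (A \<inter> \<Omega>) w"
      using set_integrable_subset[OF Linfty_set_integrable[OF \<Omega>]] w A \<Omega>
      by (auto simp: Linfty_01_def fmeasurable_def)
    then show "integrable lebesgue (\<lambda>x. indicator (A \<inter> \<Omega>) x *\<^sub>R w x)"
      by (simp add: set_integrable_def)
    show "integrable lebesgue (indicator (A \<inter> \<Omega>) :: R2 \<Rightarrow> real)"
      using Im by (intro integrable_real_indicator) (auto simp: fmeasurable_def)
    show "AE x in lebesgue. indicator (A \<inter> \<Omega>) x *\<^sub>R w x \<le> indicator (A \<inter> \<Omega>) x"
      using w01 by eventually_elim (auto simp: indicator_def)
  qed
  then show "(LINT x:A\<inter>\<Omega>|lebesgue. w x) \<le> measure lebesgue (A \<inter> \<Omega>)"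
    using Im by (simp add: fmeasurable_def)
qed

lemma Linfty_01_if_set_integrals_bounded:
  assumes \<Omega>: "\<Omega> \<in> lmeasurable" and u: "set_integrable lebesgue \<Omega> u"
    and bnd: "\<And>A. A \<in> sets lebesgue \<Longrightarrow>
      0 \<le> (LINT x:A\<inter>\<Omega>|lebesgue. u x) \<and> (LINT x:A\<inter>\<Omega>|lebesgue. u x) \<le> measure lebesgue (A \<inter> \<Omega>)"
  shows "u \<in> Linfty_01 \<Omega>"
proof -
  have \<Omega>s: "\<Omega> \<in> sets lebesgue" using \<Omega> by (simp add: fmeasurable_def)
  have "AE x in lebesgue. x \<in> \<Omega> \<longrightarrow> 0 \<le> u x"
    using bnd by (intro AE_nonneg_if_set_integrals_nonneg[OF u]) auto
  moreover have "AE x in lebesgue. x \<in> \<Omega> \<longrightarrow> 0 \<le> 1 - u x"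
  proof (rule AE_nonneg_if_set_integrals_nonneg)
    have one: "set_integrable lebesgue \<Omega> (\<lambda>x. 1::real)"
      using Linfty_set_integrable[OF \<Omega> Linfty_const[OF \<Omega>s]] .
    then show "set_integrable lebesgue \<Omega> (\<lambda>x. 1 - u x)" using u by auto
    fix A :: "R2 set" assume A: "A \<in> sets lebesgue"
    have "A \<inter> \<Omega> \<in> lmeasurable" using A \<Omega> by (metis fmeasurable_Int_fmeasurable inf_commute)
    then have "(LINT x:A\<inter>\<Omega>|lebesgue. 1 - u x) = measure lebesgue (A \<inter> \<Omega>) - (LINT x:A\<inter>\<Omega>|lebesgue. u x)"
      using set_integrable_subset[OF one, of "A \<inter> \<Omega>"] set_integrable_subset[OF u, of "A \<inter> \<Omega>"] A \<Omega>s
      by (subst set_integral_diff(2)) (auto simp: set_integral_one_lmeasurable)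
    then show "0 \<le> (LINT x:A\<inter>\<Omega>|lebesgue. 1 - u x)" using bnd[OF A] by simp
  qed
  ultimately have "AE x in lebesgue. x \<in> \<Omega> \<longrightarrow> 0 \<le> u x \<and> u x \<le> 1" by eventually_elim auto
  moreover have "set_borel_measurable lebesgue \<Omega> u"
    using u by (simp add: set_integrable_def set_borel_measurable_def)
  ultimately show ?thesis by (simp add: Linfty_01_iff)
qed

section \<open>Setwise convergence\<close>

definition setwise_tendsto :: "R2 set \<Rightarrow> (nat \<Rightarrow> R2 \<Rightarrow> real) \<Rightarrow> (R2 \<Rightarrow> real) \<Rightarrow> bool" where
  "setwise_tendsto \<Omega> w u \<longleftrightarrow>
     (\<forall>A\<in>sets lebesgue. (\<lambda>n. LINT x:A\<inter>\<Omega>|lebesgue. w n x) \<longlonglongrightarrow> (LINT x:A\<inter>\<Omega>|lebesgue. u x))"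

lemma setwise_tendsto_subseq:
  "setwise_tendsto \<Omega> w u \<Longrightarrow> strict_mono d \<Longrightarrow> setwise_tendsto \<Omega> (\<lambda>n. w (d n)) u"
  unfolding setwise_tendsto_def using LIMSEQ_subseq_LIMSEQ by (fastforce simp: o_def)

lemma convergent_set_integrals_if_convergent_on_finite_unions:
  assumes \<Omega>: "\<Omega> \<in> lmeasurable" and Bs: "topological_basis Bs" "countable Bs"
    and w: "\<And>n. w n \<in> Linfty_ball \<Omega>"
    and conv: "\<And>B. B \<in> finite_unions Bs \<Longrightarrow> convergent (\<lambda>n. LINT x:B\<inter>\<Omega>|lebesgue. w n x)"
    and A: "A \<in> sets lebesgue"
  shows "convergent (\<lambda>n. LINT x:A\<inter>\<Omega>|lebesgue. w n x)"
proof -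
  have "Cauchy (\<lambda>n. LINT x:A\<inter>\<Omega>|lebesgue. w n x)"
  proof (rule metric_CauchyI)
    fix e :: real assume e: "e > 0"
    have "A \<inter> \<Omega> \<in> lmeasurable" using A \<Omega> by (metis fmeasurable_Int_fmeasurable inf_commute)
    then obtain B where B: "B \<in> finite_unions Bs" "B \<in> lmeasurable"
      "measure lebesgue (sym_diff (A \<inter> \<Omega>) B) < e/3"
      using lmeasurable_approx_by_finite_unions[OF Bs, of "A \<inter> \<Omega>" "e/3"] e by auto
    have close: "\<bar>(LINT x:A\<inter>\<Omega>|lebesgue. w n x) - (LINT x:B\<inter>\<Omega>|lebesgue. w n x)\<bar> < e/3" for n
    proof -
      have "sym_diff A B \<inter> \<Omega> \<subseteq> sym_diff (A \<inter> \<Omega>) B" by auto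
      then have "measure lebesgue (sym_diff A B \<inter> \<Omega>) \<le> measure lebesgue (sym_diff (A \<inter> \<Omega>) B)"
        using A B(2) \<Omega> \<open>A \<inter> \<Omega> \<in> lmeasurable\<close> by (intro measure_mono_fmeasurable) auto
      then show ?thesis
        using Linfty_ball_set_integral_diff_le[OF \<Omega> w A, of B n] B(2,3) by (simp add: fmeasurable_def)
    qed
    obtain M where M: "\<forall>m\<ge>M. \<forall>n\<ge>M.
        dist (LINT x:B\<inter>\<Omega>|lebesgue. w m x) (LINT x:B\<inter>\<Omega>|lebesgue. w n x) < e/3"
      using convergent_Cauchy[OF conv[OF B(1)]] e unfolding Cauchy_def by (meson divide_pos_pos zero_less_numeral)
    show "\<exists>M. \<forall>m\<ge>M. \<forall>n\<ge>M. dist (LINT x:A\<inter>\<Omega>|lebesgue. w m x) (LINT x:A\<inter>\<Omega>|lebesgue. w n x) < e"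
    proof (intro exI allI impI)
      fix m n assume "M \<le> m" "M \<le> n"
      then have "dist (LINT x:B\<inter>\<Omega>|lebesgue. w m x) (LINT x:B\<inter>\<Omega>|lebesgue. w n x) < e/3"
        using M by blast
      then show "dist (LINT x:A\<inter>\<Omega>|lebesgue. w m x) (LINT x:A\<inter>\<Omega>|lebesgue. w n x) < e"
        using close[of m] close[of n] unfolding dist_real_def by linarith
    qed
  qed
  then show ?thesis by (simp add: Cauchy_convergent_iff)
qed

lemma dominated_additive_set_function_nn_density:
  fixes \<nu> :: "R2 set \<Rightarrow> real"
  assumes \<Omega>: "\<Omega> \<in> lmeasurable"
    and add: "\<And>A B. A \<in> sets lebesgue \<Longrightarrow> B \<in> sets lebesgue \<Longrightarrow> A \<inter> B = {} \<Longrightarrow> \<nu> (A \<union> B) = \<nu> A + \<nu> B"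
    and bnd: "\<And>A. A \<in> sets lebesgue \<Longrightarrow> 0 \<le> \<nu> A \<and> \<nu> A \<le> measure lebesgue (A \<inter> \<Omega>)"
  shows "\<exists>f\<in>borel_measurable lebesgue. \<forall>A\<in>sets lebesgue. (\<integral>\<^sup>+x. f x * indicator A x \<partial>lebesgue) = \<nu> A"
proof -
  define N where "N = measure_of (space lebesgue) (sets lebesgue) (\<lambda>A. ennreal (\<nu> A))"
  have ca: "countably_additive (sets lebesgue) (\<lambda>A. ennreal (\<nu> A))"
    using \<Omega> add bnd by (intro countably_additive_if_dominated) (auto simp: fmeasurable_def)
  have sN: "sets N = sets lebesgue"
    unfolding N_def using sets.sigma_sets_eq[of lebesgue] by simp
  have eN: "emeasure N A = ennreal (\<nu> A)" if "A \<in> sets lebesgue" for A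
    unfolding N_def using bnd[of "{}"]
    by (intro emeasure_measure_of_sigma[OF sets.sigma_algebra_axioms _ ca that]) (simp add: positive_def)
  have "absolutely_continuous lebesgue N"
    unfolding absolutely_continuous_def
  proof
    fix A :: "R2 set" assume A: "A \<in> null_sets lebesgue"
    then have "measure lebesgue (A \<inter> \<Omega>) = 0"
      using \<Omega> by (intro measure_eq_0_null_sets) (auto intro: null_set_Int2 simp: fmeasurable_def)
    then show "A \<in> null_sets N" using A bnd[of A] eN[of A] sN by (auto simp: null_sets_def)
  qed
  then obtain f where f: "f \<in> borel_measurable lebesgue" "density lebesgue f = N"
    using sigma_finite_measure.Radon_Nikodym[OF sigma_finite_lebesgue _ sN] by metis
  then show ?thesis
    using emeasure_density[OF f(1)] eN by (intro bexI[OF _ f(1)]) auto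
qed

lemma dominated_additive_set_function_density:
  fixes \<nu> :: "R2 set \<Rightarrow> real"
  assumes \<Omega>: "\<Omega> \<in> lmeasurable"
    and add: "\<And>A B. A \<in> sets lebesgue \<Longrightarrow> B \<in> sets lebesgue \<Longrightarrow> A \<inter> B = {} \<Longrightarrow> \<nu> (A \<union> B) = \<nu> A + \<nu> B"
    and bnd: "\<And>A. A \<in> sets lebesgue \<Longrightarrow> 0 \<le> \<nu> A \<and> \<nu> A \<le> measure lebesgue (A \<inter> \<Omega>)"
  shows "\<exists>u. \<forall>A\<in>sets lebesgue. set_integrable lebesgue (A \<inter> \<Omega>) u \<and> (LINT x:A\<inter>\<Omega>|lebesgue. u x) = \<nu> A"
proof -
  have \<Omega>s: "\<Omega> \<in> sets lebesgue" using \<Omega> by (simp add: fmeasurable_def)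
  obtain f where f: "f \<in> borel_measurable lebesgue"
    and f_int: "\<And>A. A \<in> sets lebesgue \<Longrightarrow> (\<integral>\<^sup>+x. f x * indicator A x \<partial>lebesgue) = \<nu> A"
    using dominated_additive_set_function_nn_density[OF assms] by blast
  have \<nu>_restrict: "\<nu> (A \<inter> \<Omega>) = \<nu> A" if A: "A \<in> sets lebesgue" for A
  proof -
    have "(A - \<Omega>) \<inter> \<Omega> = {}" by blast
    then have "\<nu> (A - \<Omega>) = 0" using bnd[of "A - \<Omega>"] A \<Omega>s by (metis antisym measure_empty sets.Diff)
    then show ?thesis using add[of "A \<inter> \<Omega>" "A - \<Omega>"] A \<Omega>s by (simp add: Int_Diff_Un Int_Diff_disjoint)
  qed
  have f_fin: "AE x in lebesgue. x \<in> \<Omega> \<longrightarrow> f x \<noteq> \<infinity>"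
  proof -
    have "AE x in lebesgue. f x * indicator \<Omega> x \<noteq> \<infinity>"
      using f f_int[OF \<Omega>s] \<Omega>s by (intro nn_integral_PInf_AE) auto
    then show ?thesis by eventually_elim (auto simp: indicator_def)
  qed
  define u where "u x = enn2real (f x) * indicator \<Omega> x" for x
  have "set_integrable lebesgue (A \<inter> \<Omega>) u \<and> (LINT x:A\<inter>\<Omega>|lebesgue. u x) = \<nu> A"
    if A: "A \<in> sets lebesgue" for A
  proof -
    let ?h = "\<lambda>x. indicator (A \<inter> \<Omega>) x * u x"
    have hm: "?h \<in> borel_measurable lebesgue" using f A \<Omega>s unfolding u_def by measurable
    have hn: "AE x in lebesgue. 0 \<le> ?h x" by (simp add: u_def)
    have "(\<integral>\<^sup>+x. ennreal (?h x) \<partial>lebesgue) = (\<integral>\<^sup>+x. f x * indicator (A \<inter> \<Omega>) x \<partial>lebesgue)"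
    proof (rule nn_integral_cong_AE)
      show "AE x in lebesgue. ennreal (?h x) = f x * indicator (A \<inter> \<Omega>) x"
        using f_fin by eventually_elim (auto simp: u_def indicator_def less_top)
    qed
    also have "\<dots> = ennreal (\<nu> A)" using f_int[of "A \<inter> \<Omega>"] \<nu>_restrict A \<Omega>s by simp
    finally have nn: "(\<integral>\<^sup>+x. ennreal (?h x) \<partial>lebesgue) = ennreal (\<nu> A)" .
    have hi: "integrable lebesgue ?h" by (rule integrableI_nn_integral_finite[OF hm hn nn])
    have "integral\<^sup>L lebesgue ?h = \<nu> A"
      using nn_integral_eq_integral[OF hi hn] nn bnd[OF A] integral_nonneg_AE[OF hn] by simp
    then show ?thesis using hi unfolding set_integrable_def set_lebesgue_integral_def by simp
  qed
  then show ?thesis by blast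
qed

lemma setwise_limit_exists:
  assumes \<Omega>: "\<Omega> \<in> lmeasurable" and w: "\<And>n. w n \<in> Linfty_01 \<Omega>"
    and conv: "\<And>A. A \<in> sets lebesgue \<Longrightarrow> convergent (\<lambda>n. LINT x:A\<inter>\<Omega>|lebesgue. w n x)"
  shows "\<exists>u\<in>Linfty_01 \<Omega>. setwise_tendsto \<Omega> w u"
proof -
  have \<Omega>s: "\<Omega> \<in> sets lebesgue" using \<Omega> by (simp add: fmeasurable_def)
  define \<nu> where "\<nu> A = lim (\<lambda>n. LINT x:A\<inter>\<Omega>|lebesgue. w n x)" for A
  have lim: "(\<lambda>n. LINT x:A\<inter>\<Omega>|lebesgue. w n x) \<longlonglongrightarrow> \<nu> A" if "A \<in> sets lebesgue" for A
    using conv[OF that] unfolding \<nu>_def by (simp add: convergent_LIMSEQ_iff)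
  have add: "\<nu> (A \<union> B) = \<nu> A + \<nu> B"
    if A: "A \<in> sets lebesgue" and B: "B \<in> sets lebesgue" and "A \<inter> B = {}" for A B
  proof -
    have "(LINT x:(A \<union> B)\<inter>\<Omega>|lebesgue. w n x)
        = (LINT x:A\<inter>\<Omega>|lebesgue. w n x) + (LINT x:B\<inter>\<Omega>|lebesgue. w n x)" for n
      using set_integrable_subset[OF Linfty_set_integrable[OF \<Omega>], of "w n"] w[of n] \<Omega>s that
      by (subst set_integral_Un[symmetric]) (auto simp: Linfty_01_def Int_Un_distrib2)
    then show ?thesis
      using lim[of "A \<union> B"] tendsto_add[OF lim[OF A] lim[OF B]] A B by (simp add: LIMSEQ_unique)
  qed
  have bnd: "0 \<le> \<nu> A \<and> \<nu> A \<le> measure lebesgue (A \<inter> \<Omega>)" if "A \<in> sets lebesgue" for A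
    using Linfty_01_set_integral_bounds[OF \<Omega> w that] lim[OF that]
    by (meson LIMSEQ_le_const LIMSEQ_le_const2)
  obtain u where u: "\<And>A. A \<in> sets lebesgue \<Longrightarrow>
      set_integrable lebesgue (A \<inter> \<Omega>) u \<and> (LINT x:A\<inter>\<Omega>|lebesgue. u x) = \<nu> A"
    using dominated_additive_set_function_density[OF \<Omega> add bnd] by blast
  have "u \<in> Linfty_01 \<Omega>"
    using u[of UNIV] u bnd by (intro Linfty_01_if_set_integrals_bounded[OF \<Omega>]) auto
  then show ?thesis
    unfolding setwise_tendsto_def using lim u by (intro bexI[of _ u]) simp_all
qed

lemma Linfty_01_setwise_compact:
  fixes w :: "nat \<Rightarrow> 'i \<Rightarrow> R2 \<Rightarrow> real"
  assumes \<Omega>: "\<Omega> \<in> lmeasurable" and I: "countable I" and w: "\<And>n i. i \<in> I \<Longrightarrow> w n i \<in> Linfty_01 \<Omega>"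
  shows "\<exists>d u. strict_mono d \<and> (\<forall>i\<in>I. u i \<in> Linfty_01 \<Omega> \<and> setwise_tendsto \<Omega> (\<lambda>n. w (d n) i) (u i))"
proof -
  obtain Bs :: "R2 set set" where Bs: "countable Bs" "topological_basis Bs"
    using ex_countable_basis by blast
  define X where "X = (\<lambda>(i, B) n. LINT x:B\<inter>\<Omega>|lebesgue. w n i x)"
  have bdd: "bounded (range (X j))" if jI: "j \<in> I \<times> finite_unions Bs" for j
  proof -
    obtain i B where j: "j = (i, B)" "i \<in> I" "B \<in> finite_unions Bs" using jI by blast
    have B: "B \<in> sets lebesgue" using open_finite_unions[OF Bs(2) j(3)] by (simp add: borel_open)
    then have "measure lebesgue (B \<inter> \<Omega>) \<le> measure lebesgue \<Omega>"
      using \<Omega> by (intro measure_mono_fmeasurable) (auto simp: fmeasurable_def)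
    then have "\<bar>LINT x:B\<inter>\<Omega>|lebesgue. w n i x\<bar> \<le> measure lebesgue \<Omega>" for n
      using Linfty_01_set_integral_bounds[OF \<Omega> w[of i n, OF j(2)] B] by linarith
    then show ?thesis
      unfolding X_def j(1) bounded_iff by (intro exI[of _ "measure lebesgue \<Omega>"]) simp
  qed
  have "countable (I \<times> finite_unions Bs)"
    using I countable_finite_unions[OF Bs(1)] by (rule countable_SIGMA)
  then obtain d where d: "strict_mono d" "\<forall>j\<in>I \<times> finite_unions Bs. convergent (\<lambda>n. X j (d n))"
    using bounded_seqs_common_convergent_subseq[of "I \<times> finite_unions Bs" X] bdd by meson
  have conv: "convergent (\<lambda>n. LINT x:B\<inter>\<Omega>|lebesgue. w (d n) i x)"
    if "i \<in> I" "B \<in> finite_unions Bs" for i B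
    using bspec[OF d(2), of "(i, B)"] that by (simp add: X_def)
  have "\<forall>i\<in>I. \<exists>u. u \<in> Linfty_01 \<Omega> \<and> setwise_tendsto \<Omega> (\<lambda>n. w (d n) i) u"
  proof
    fix i assume i: "i \<in> I"
    have wd: "w (d n) i \<in> Linfty_01 \<Omega>" for n using w[OF i] .
    have "w (d n) i \<in> Linfty_ball \<Omega>" for n using Linfty_01_subset_ball wd by (rule subsetD)
    then have "convergent (\<lambda>n. LINT x:A\<inter>\<Omega>|lebesgue. w (d n) i x)" if "A \<in> sets lebesgue" for A
      using conv[OF i] that
      by (rule convergent_set_integrals_if_convergent_on_finite_unions[OF \<Omega> Bs(2,1), where w="\<lambda>n. w (d n) i"])
    then show "\<exists>u. u \<in> Linfty_01 \<Omega> \<and> setwise_tendsto \<Omega> (\<lambda>n. w (d n) i) u"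
      using setwise_limit_exists[OF \<Omega>, where w="\<lambda>n. w (d n) i"] wd by blast
  qed
  from bchoice[OF this] obtain u
    where "\<forall>i\<in>I. u i \<in> Linfty_01 \<Omega> \<and> setwise_tendsto \<Omega> (\<lambda>n. w (d n) i) (u i)" ..
  then show ?thesis
    using d(1) by blast
qed

lemma tendsto_if_approximable:
  fixes F :: "nat \<Rightarrow> nat \<Rightarrow> real"
  assumes F: "\<And>i. (\<lambda>n. F i n) \<longlonglongrightarrow> L i" and D: "D \<longlonglongrightarrow> 0"
    and G: "\<And>i n. \<bar>F i n - G n\<bar> \<le> D i" and L: "\<And>i. \<bar>L i - L'\<bar> \<le> D i"
  shows "G \<longlonglongrightarrow> L'"
proof (rule LIMSEQ_I)
  fix r :: real assume r: "0 < r"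
  obtain i where "\<forall>n\<ge>i. norm (D n - 0) < r/3"
    using LIMSEQ_D[OF D, of "r/3"] r by auto
  then have i: "D i < r/3" by auto
  obtain N where N: "\<And>n. n \<ge> N \<Longrightarrow> \<bar>F i n - L i\<bar> < r/3"
    using LIMSEQ_D[OF F, of "r/3"] r by fastforce
  have "\<bar>G n - L'\<bar> < r" if "n \<ge> N" for n
    using N[OF that] G[of i n] L[of i] i by linarith
  then show "\<exists>N. \<forall>n\<ge>N. norm (G n - L') < r" by auto
qed

lemma integral_abs_diff_tendsto_zero:
  fixes f :: "'a \<Rightarrow> real"
  assumes f: "integrable M f" and s: "\<And>i. s i \<in> borel_measurable M"
    and lim: "\<And>x. x \<in> space M \<Longrightarrow> (\<lambda>i. s i x) \<longlonglongrightarrow> f x"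
    and bnd: "\<And>i x. x \<in> space M \<Longrightarrow> norm (s i x) \<le> 2 * norm (f x)"
  shows "(\<lambda>i. \<integral>x. \<bar>s i x - f x\<bar> \<partial>M) \<longlonglongrightarrow> 0"
proof -
  have conv: "AE x in M. (\<lambda>i. \<bar>s i x - f x\<bar>) \<longlonglongrightarrow> 0"
    using tendsto_rabs_zero[OF LIM_zero[OF lim]] by simp
  have bound: "AE x in M. norm \<bar>s i x - f x\<bar> \<le> 3 * norm (f x)" for i
  proof (rule AE_I2)
    fix x assume "x \<in> space M"
    then have "norm (s i x) \<le> 2 * norm (f x)" by (rule bnd)
    then show "norm \<bar>s i x - f x\<bar> \<le> 3 * norm (f x)" by simp
  qed
  have meas: "(\<lambda>x. \<bar>s i x - f x\<bar>) \<in> borel_measurable M" for i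
    using s f by measurable
  show ?thesis
    using Bochner_Integration.integral_dominated_convergence[OF borel_measurable_const meas _ conv bound] f
    by simp
qed

lemma setwise_tendsto_integral:
  assumes \<Omega>: "\<Omega> \<in> lmeasurable" and w: "\<And>n. w n \<in> Linfty_ball \<Omega>" and u: "u \<in> Linfty_ball \<Omega>"
    and lim: "setwise_tendsto \<Omega> w u" and g: "integrable lebesgue g"
  shows "(\<lambda>n. \<integral>x. indicator \<Omega> x * w n x * g x \<partial>lebesgue) \<longlonglongrightarrow> (\<integral>x. indicator \<Omega> x * u x * g x \<partial>lebesgue)"
  using g
proof (induct rule: integrable_induct)
  case (base A c)
  have "(\<integral>x. indicator \<Omega> x * v x * (indicator A x *\<^sub>R c) \<partial>lebesgue) = c * (LINT x:A\<inter>\<Omega>|lebesgue. v x)"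
    for v :: "R2 \<Rightarrow> real"
  proof -
    have "(\<lambda>x. indicator \<Omega> x * v x * (indicator A x *\<^sub>R c)) = (\<lambda>x. c * (indicator (A \<inter> \<Omega>) x *\<^sub>R v x))"
      by (auto simp: indicator_def)
    then show ?thesis unfolding set_lebesgue_integral_def by simp
  qed
  then show ?case
    using lim base(1) unfolding setwise_tendsto_def by (simp add: tendsto_mult_left)
next
  case (add f g)
  have "(\<integral>x. indicator \<Omega> x * v x * (f x + g x) \<partial>lebesgue) =
      (\<integral>x. indicator \<Omega> x * v x * f x \<partial>lebesgue) + (\<integral>x. indicator \<Omega> x * v x * g x \<partial>lebesgue)"
    if "v \<in> Linfty_ball \<Omega>" for v
    using Linfty_ball_integrable[OF that add(1)] Linfty_ball_integrable[OF that add(3)]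
    by (subst Bochner_Integration.integral_add[symmetric]) (auto simp: algebra_simps)
  then show ?case
    using w u by (simp add: tendsto_add add(2,4))
next
  case (lim f s)
  have D: "(\<lambda>i. \<integral>x. \<bar>s i x - f x\<bar> \<partial>lebesgue) \<longlonglongrightarrow> 0"
    using lim(1,3,4,5) by (intro integral_abs_diff_tendsto_zero) auto
  show ?case
    using lim(2) D Linfty_ball_integral_diff_le[OF w lim(1) lim(5)] Linfty_ball_integral_diff_le[OF u lim(1) lim(5)]
    by (rule tendsto_if_approximable)
qed

lemma setwise_tendsto_Linfty_integral:
  assumes \<Omega>: "\<Omega> \<in> lmeasurable" and w: "\<And>n. w n \<in> Linfty_ball \<Omega>" and u: "u \<in> Linfty_ball \<Omega>"
    and lim: "setwise_tendsto \<Omega> w u" and h: "h \<in> Linfty \<Omega>"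
  shows "(\<lambda>n. LINT x:\<Omega>|lebesgue. w n x * h x) \<longlonglongrightarrow> (LINT x:\<Omega>|lebesgue. u x * h x)"
proof -
  have "(LINT x:\<Omega>|lebesgue. v x * h x) = (\<integral>x. indicator \<Omega> x * v x * (indicator \<Omega> x * h x) \<partial>lebesgue)"
    for v :: "R2 \<Rightarrow> real"
    unfolding set_lebesgue_integral_def by (intro Bochner_Integration.integral_cong) (auto simp: indicator_def)
  moreover have "integrable lebesgue (\<lambda>x. indicator \<Omega> x * h x)"
    using Linfty_set_integrable[OF \<Omega> h] by (simp add: set_integrable_def)
  ultimately show ?thesis
    using setwise_tendsto_integral[OF \<Omega> w u lim] by simp
qed

section \<open>Total variation\<close>

lemma TV_nonneg: "0 \<le> TV \<Omega> u"
proof -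
  have "(\<lambda>x. 0) \<in> test_fields \<Omega>" unfolding test_fields_def by auto
  then have "ereal (LINT x:\<Omega>|lebesgue. u x * divergence (\<lambda>x. 0) x) \<le> TV \<Omega> u"
    unfolding TV_def by (rule SUP_upper)
  then show ?thesis by (simp add: divergence_def zero_ereal_def)
qed

lemma divergence_Linfty:
  assumes g: "g \<in> test_fields \<Omega>" and \<Omega>: "\<Omega> \<in> sets lebesgue" "bounded \<Omega>"
  shows "divergence g \<in> Linfty \<Omega>"
proof -
  have c: "continuous_on UNIV (divergence g)"
    unfolding divergence_def[abs_def] using g unfolding test_fields_def
    by (intro continuous_on_sum continuous_on_inner continuous_on_const) auto
  have "compact (divergence g ` closure \<Omega>)"
    using \<Omega>(2) by (intro compact_continuous_image continuous_on_subset[OF c]) (auto simp: compact_closure)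
  then obtain B where "\<forall>y\<in>divergence g ` closure \<Omega>. norm y \<le> B"
    using compact_imp_bounded bounded_iff by metis
  then have "AE x in lebesgue. x \<in> \<Omega> \<longrightarrow> \<bar>divergence g x\<bar> \<le> B"
    using closure_subset by (intro AE_I2) fastforce
  moreover have "divergence g \<in> borel_measurable lebesgue"
    using c by (simp add: borel_measurable_continuous_onI measurable_completion)
  then have "set_borel_measurable lebesgue \<Omega> (divergence g)"
    unfolding set_borel_measurable_def using \<Omega>(1) by measurable
  ultimately show ?thesis unfolding Linfty_def by blast
qed

lemma TV_le_lim:
  assumes \<Omega>: "\<Omega> \<in> lmeasurable" "bounded \<Omega>"
    and w: "\<And>n. w n \<in> Linfty_ball \<Omega>" and u: "u \<in> Linfty_ball \<Omega>" and lim: "setwise_tendsto \<Omega> w u"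
    and T: "\<And>n. TV \<Omega> (w n) \<le> ereal (T n)" "T \<longlonglongrightarrow> t"
  shows "TV \<Omega> u \<le> ereal t"
  unfolding TV_def
proof (rule SUP_least)
  fix g assume g: "g \<in> test_fields \<Omega>"
  have "divergence g \<in> Linfty \<Omega>"
    using divergence_Linfty[OF g _ \<Omega>(2)] \<Omega>(1) by (simp add: fmeasurable_def)
  then have lim_div: "(\<lambda>n. LINT x:\<Omega>|lebesgue. w n x * divergence g x) \<longlonglongrightarrow> (LINT x:\<Omega>|lebesgue. u x * divergence g x)"
    by (rule setwise_tendsto_Linfty_integral[OF \<Omega>(1) w u lim])
  have "ereal (LINT x:\<Omega>|lebesgue. w n x * divergence g x) \<le> ereal (T n)" for n
    using SUP_upper[OF g, of "\<lambda>g. ereal (LINT x:\<Omega>|lebesgue. w n x * divergence g x)"] T(1)[of n]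
    unfolding TV_def by (rule order_trans)
  then have "(LINT x:\<Omega>|lebesgue. u x * divergence g x) \<le> t"
    by (intro LIMSEQ_le[OF lim_div T(2)]) auto
  then show "ereal (LINT x:\<Omega>|lebesgue. u x * divergence g x) \<le> ereal t" by simp
qed

section \<open>The two-phase data term\<close>

lemma clamp_real_bound: "M \<ge> 0 \<Longrightarrow> \<bar>clamp (- M) M (a::real)\<bar> \<le> M"
  using clamp_in_interval[of "- M" M a] by (simp add: abs_le_iff)

lemma clamp_real_sq_dist_le:
  fixes a p :: real
  assumes "\<bar>p\<bar> \<le> M"
  shows "(clamp (- M) M a - p)\<^sup>2 \<le> (a - p)\<^sup>2"
proof -
  have "clamp (- M) M p = p" using assms by (intro clamp_cancel_cbox) auto
  then have "\<bar>clamp (- M) M a - p\<bar> \<le> \<bar>a - p\<bar>"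
    using dist_clamps_le_dist_args[of "- M" M a p] by (simp add: dist_real_def)
  then show ?thesis by (simp add: abs_le_square_iff)
qed

lemma Linfty_two_phase_integrand:
  assumes \<Omega>: "\<Omega> \<in> sets lebesgue" and v: "v \<in> Linfty \<Omega>" and p: "p \<in> Linfty \<Omega>"
  shows "(\<lambda>x. (a - p x)\<^sup>2 * v x + (b - p x)\<^sup>2 * (1 - v x)) \<in> Linfty \<Omega>"
proof -
  have ap: "(\<lambda>x. a - p x) \<in> Linfty \<Omega>" and bp: "(\<lambda>x. b - p x) \<in> Linfty \<Omega>"
    and ov: "(\<lambda>x. 1 - v x) \<in> Linfty \<Omega>"
    by (intro Linfty_diff Linfty_const \<Omega> p v)+
  have "(\<lambda>x. (a - p x) * (a - p x) * v x + (b - p x) * (b - p x) * (1 - v x)) \<in> Linfty \<Omega>"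
    by (intro Linfty_add Linfty_mult ap bp ov v)
  then show ?thesis by (simp add: power2_eq_square)
qed

lemma two_phase_integral_expand:
  assumes \<Omega>: "\<Omega> \<in> lmeasurable" and v: "v \<in> Linfty \<Omega>" and p: "p \<in> Linfty \<Omega>"
  shows "(LINT x:\<Omega>|lebesgue. (a - p x)\<^sup>2 * v x + (b - p x)\<^sup>2 * (1 - v x)) =
     (a\<^sup>2 - b\<^sup>2) * (LINT x:\<Omega>|lebesgue. v x * 1) - 2 * (a - b) * (LINT x:\<Omega>|lebesgue. v x * p x)
     + (b\<^sup>2 * measure lebesgue \<Omega> - 2 * b * (LINT x:\<Omega>|lebesgue. p x) + (LINT x:\<Omega>|lebesgue. p x * p x))"
proof -
  have \<Omega>s: "\<Omega> \<in> sets lebesgue" using \<Omega> by (simp add: fmeasurable_def)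
  note int = Linfty_set_integrable[OF \<Omega>]
  have i1: "set_integrable lebesgue \<Omega> (\<lambda>x. (a\<^sup>2 - b\<^sup>2) * v x)"
    by (intro int Linfty_mult Linfty_const \<Omega>s v)
  have i2: "set_integrable lebesgue \<Omega> (\<lambda>x. (- 2 * (a - b)) * (v x * p x))"
    by (intro int Linfty_mult Linfty_const \<Omega>s v p)
  have i3: "set_integrable lebesgue \<Omega> (\<lambda>x. b\<^sup>2)"
    by (intro int Linfty_const \<Omega>s)
  have i4: "set_integrable lebesgue \<Omega> (\<lambda>x. (- 2 * b) * p x)"
    by (intro int Linfty_mult Linfty_const \<Omega>s p)
  have i5: "set_integrable lebesgue \<Omega> (\<lambda>x. p x * p x)"
    by (intro int Linfty_mult p)
  have "(\<lambda>x. (a - p x)\<^sup>2 * v x + (b - p x)\<^sup>2 * (1 - v x)) =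
     (\<lambda>x. ((a\<^sup>2 - b\<^sup>2) * v x + (- 2 * (a - b)) * (v x * p x)) + ((b\<^sup>2 + (- 2 * b) * p x) + p x * p x))"
    by (auto simp: power2_eq_square algebra_simps)
  then have sum: "(LINT x:\<Omega>|lebesgue. (a - p x)\<^sup>2 * v x + (b - p x)\<^sup>2 * (1 - v x))
      = ((LINT x:\<Omega>|lebesgue. (a\<^sup>2 - b\<^sup>2) * v x) + (LINT x:\<Omega>|lebesgue. (- 2 * (a - b)) * (v x * p x)))
      + (((LINT x:\<Omega>|lebesgue. b\<^sup>2) + (LINT x:\<Omega>|lebesgue. (- 2 * b) * p x)) + (LINT x:\<Omega>|lebesgue. p x * p x))"
    using set_integral_add(2)[OF set_integral_add(1)[OF i1 i2] set_integral_add(1)[OF set_integral_add(1)[OF i3 i4] i5]]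
      set_integral_add(2)[OF i1 i2] set_integral_add(2)[OF set_integral_add(1)[OF i3 i4] i5]
      set_integral_add(2)[OF i3 i4]
    by (simp only:)
  have const: "(LINT x:\<Omega>|lebesgue. b\<^sup>2) = b\<^sup>2 * measure lebesgue \<Omega>"
    using set_integral_const[OF \<Omega>s, of "b\<^sup>2"] fmeasurableD2[OF \<Omega>] by (simp add: infinity_ennreal_def)
  have "(LINT x:\<Omega>|lebesgue. c * f x) = c * (LINT x:\<Omega>|lebesgue. f x)" for c and f :: "R2 \<Rightarrow> real"
    by (rule set_integral_mult_right)
  note scale = this[of "a\<^sup>2 - b\<^sup>2" v] this[of "- 2 * (a - b)"] this[of "- 2 * b" p]
  show ?thesis
    unfolding sum const scale by (simp add: algebra_simps)
qed

lemma two_phase_integral_nonneg: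
  fixes v p :: "R2 \<Rightarrow> real"
  assumes "AE x in lebesgue. x \<in> \<Omega> \<longrightarrow> 0 \<le> v x \<and> v x \<le> 1"
  shows "0 \<le> (LINT x:\<Omega>|lebesgue. (a - p x)\<^sup>2 * v x + (b - p x)\<^sup>2 * (1 - v x))"
  unfolding set_lebesgue_integral_def
  by (rule Bochner_Integration.integral_nonneg_AE) (use assms in \<open>eventually_elim, auto simp: indicator_def\<close>)

lemma two_phase_integral_clamp_le:
  assumes \<Omega>: "\<Omega> \<in> lmeasurable" and v: "v \<in> Linfty_01 \<Omega>"
    and p: "p \<in> Linfty \<Omega>" "AE x in lebesgue. x \<in> \<Omega> \<longrightarrow> \<bar>p x\<bar> \<le> M"
  shows "(LINT x:\<Omega>|lebesgue. (clamp (- M) M a - p x)\<^sup>2 * v x + (clamp (- M) M b - p x)\<^sup>2 * (1 - v x))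
    \<le> (LINT x:\<Omega>|lebesgue. (a - p x)\<^sup>2 * v x + (b - p x)\<^sup>2 * (1 - v x))"
  unfolding set_lebesgue_integral_def
proof (rule integral_mono_AE)
  have \<Omega>s: "\<Omega> \<in> sets lebesgue" using \<Omega> by (simp add: fmeasurable_def)
  have vL: "v \<in> Linfty \<Omega>" using v by (simp add: Linfty_01_def)
  show "integrable lebesgue (\<lambda>x. indicator \<Omega> x *\<^sub>R ((clamp (- M) M a - p x)\<^sup>2 * v x
      + (clamp (- M) M b - p x)\<^sup>2 * (1 - v x)))"
    "integrable lebesgue (\<lambda>x. indicator \<Omega> x *\<^sub>R ((a - p x)\<^sup>2 * v x + (b - p x)\<^sup>2 * (1 - v x)))"
    using Linfty_set_integrable[OF \<Omega> Linfty_two_phase_integrand[OF \<Omega>s vL p(1)]]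
    by (simp_all add: set_integrable_def)
  have "AE x in lebesgue. x \<in> \<Omega> \<longrightarrow> 0 \<le> v x \<and> v x \<le> 1" using v by (simp add: Linfty_01_def)
  then show "AE x in lebesgue. indicator \<Omega> x *\<^sub>R ((clamp (- M) M a - p x)\<^sup>2 * v x
      + (clamp (- M) M b - p x)\<^sup>2 * (1 - v x)) \<le> indicator \<Omega> x *\<^sub>R ((a - p x)\<^sup>2 * v x + (b - p x)\<^sup>2 * (1 - v x))"
    using p(2)
  proof eventually_elim
    case (elim x)
    show ?case
    proof (cases "x \<in> \<Omega>")
      case True
      then have "0 \<le> v x" "0 \<le> 1 - v x" "\<bar>p x\<bar> \<le> M" using elim by auto
      then show ?thesis
        using True clamp_real_sq_dist_le[of "p x" M] by (simp add: add_mono mult_right_mono)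
    qed simp
  qed
qed

lemma two_phase_integral_tendsto:
  assumes \<Omega>: "\<Omega> \<in> lmeasurable" and p: "p \<in> Linfty \<Omega>"
    and w: "\<And>n. w n \<in> Linfty_ball \<Omega>" and u: "u \<in> Linfty_ball \<Omega>" and lim: "setwise_tendsto \<Omega> w u"
    and a: "\<alpha> \<longlonglongrightarrow> a" and b: "\<beta> \<longlonglongrightarrow> b"
  shows "(\<lambda>n. LINT x:\<Omega>|lebesgue. (\<alpha> n - p x)\<^sup>2 * w n x + (\<beta> n - p x)\<^sup>2 * (1 - w n x))
      \<longlonglongrightarrow> (LINT x:\<Omega>|lebesgue. (a - p x)\<^sup>2 * u x + (b - p x)\<^sup>2 * (1 - u x))"
proof -
  have \<Omega>s: "\<Omega> \<in> sets lebesgue" using \<Omega> by (simp add: fmeasurable_def)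
  have "w n \<in> Linfty \<Omega>" "u \<in> Linfty \<Omega>" for n using w u by (simp_all add: Linfty_ball_def)
  moreover have "(\<lambda>n. LINT x:\<Omega>|lebesgue. w n x * h x) \<longlonglongrightarrow> (LINT x:\<Omega>|lebesgue. u x * h x)"
    if "h \<in> Linfty \<Omega>" for h
    using setwise_tendsto_Linfty_integral[OF \<Omega> w u lim that] .
  ultimately show ?thesis
    using Linfty_const[OF \<Omega>s, of 1] p
    by (simp only: two_phase_integral_expand[OF \<Omega> _ p]) (intro tendsto_intros a b)
qed

section \<open>Admissible fields and the reduced functional\<close>

lemma admissible_component:
  assumes u: "u \<in> admissible \<Omega> K" and k: "k < K"
  shows "u k \<in> Linfty_01 \<Omega>" "TV \<Omega> (u k) < \<infinity>"
proof -
  have bv: "u k \<in> BV \<Omega>" using u k unfolding admissible_def by blast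
  then show "TV \<Omega> (u k) < \<infinity>" unfolding BV_def by blast
  have "AE x in lebesgue. x \<in> \<Omega> \<longrightarrow> (\<forall>k<K. u k x \<ge> 0) \<and> (\<Sum>k<K. u k x) \<le> 1"
    using u unfolding admissible_def by blast
  then have "AE x in lebesgue. x \<in> \<Omega> \<longrightarrow> 0 \<le> u k x \<and> u k x \<le> 1"
  proof eventually_elim
    case (elim x)
    show ?case
    proof
      assume x: "x \<in> \<Omega>"
      have "u k x \<le> (\<Sum>k<K. u k x)" using elim x k by (intro member_le_sum) auto
      then show "0 \<le> u k x \<and> u k x \<le> 1" using elim x k by auto
    qed
  qed
  moreover have "set_borel_measurable lebesgue \<Omega> (u k)"
    using bv unfolding BV_def set_integrable_def set_borel_measurable_def by auto
  ultimately show "u k \<in> Linfty_01 \<Omega>" by (simp add: Linfty_01_iff)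
qed

lemma Df_nonneg: "u \<in> admissible \<Omega> K \<Longrightarrow> 0 \<le> Df \<Omega> K \<phi> u a b"
  unfolding Df_def using admissible_component(1)
  by (intro sum_nonneg two_phase_integral_nonneg) (auto simp: Linfty_01_def)

lemma Df_Inf_le: "u \<in> admissible \<Omega> K \<Longrightarrow> Inf {Df \<Omega> K \<phi> u a b |a b. True} \<le> Df \<Omega> K \<phi> u a b"
  by (rule cInf_lower) (auto intro: Df_nonneg simp: bdd_below_def)

lemma Rf_admissible:
  assumes u: "u \<in> admissible \<Omega> K"
  shows "Rf \<Omega> K \<phi> lam u =
    ereal (lam * (\<Sum>k<K. real_of_ereal (TV \<Omega> (u k))) + Inf {Df \<Omega> K \<phi> u a b |a b. True})"
proof -
  have "TV \<Omega> (u k) = ereal (real_of_ereal (TV \<Omega> (u k)))" if "k < K" for k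
    using admissible_component(2)[OF u that] TV_nonneg[of \<Omega> "u k"] by (cases "TV \<Omega> (u k)") auto
  then have "Qf \<Omega> K u = ereal (\<Sum>k<K. real_of_ereal (TV \<Omega> (u k)))"
    unfolding Qf_def by (simp add: sum_ereal[symmetric])
  then show ?thesis using u unfolding Rf_def by simp
qed

lemma Rf_nonneg: "lam \<ge> 0 \<Longrightarrow> 0 \<le> Rf \<Omega> K \<phi> lam u"
proof (cases "u \<in> admissible \<Omega> K")
  case True
  assume "lam \<ge> 0"
  moreover have "0 \<le> (\<Sum>k<K. real_of_ereal (TV \<Omega> (u k)))"
    by (intro sum_nonneg) (simp add: real_of_ereal_pos TV_nonneg)
  moreover have "0 \<le> Inf {Df \<Omega> K \<phi> u a b |a b. True}"
    using True by (intro cInf_greatest) (auto intro: Df_nonneg)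
  ultimately show ?thesis unfolding Rf_admissible[OF True] by simp
qed (simp add: Rf_def)

lemma zero_admissible: "(\<lambda>k x. 0) \<in> admissible \<Omega> K"
proof -
  have "TV \<Omega> (\<lambda>x. 0) \<le> 0" unfolding TV_def by (rule SUP_least) (simp add: zero_ereal_def)
  then have "(\<lambda>x. 0) \<in> BV \<Omega>" unfolding BV_def set_integrable_def by auto
  then show ?thesis unfolding admissible_def by auto
qed

lemma Df_tendsto:
  assumes \<Omega>: "\<Omega> \<in> lmeasurable" and \<phi>: "\<And>k. k < K \<Longrightarrow> \<phi> k \<in> Linfty \<Omega>"
    and w: "\<And>n k. k < K \<Longrightarrow> w n k \<in> Linfty_ball \<Omega>" and u: "\<And>k. k < K \<Longrightarrow> u k \<in> Linfty_ball \<Omega>"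
    and lim: "\<And>k. k < K \<Longrightarrow> setwise_tendsto \<Omega> (\<lambda>n. w n k) (u k)"
    and a: "\<And>k. k < K \<Longrightarrow> (\<lambda>n. \<alpha> n k) \<longlonglongrightarrow> a k" and b: "\<And>k. k < K \<Longrightarrow> (\<lambda>n. \<beta> n k) \<longlonglongrightarrow> b k"
  shows "(\<lambda>n. Df \<Omega> K \<phi> (w n) (\<alpha> n) (\<beta> n)) \<longlonglongrightarrow> Df \<Omega> K \<phi> u a b"
  unfolding Df_def
  by (intro tendsto_sum two_phase_integral_tendsto[OF \<Omega>] \<phi> w u lim a b) simp_all

lemma set_integral_one_minus_sum:
  assumes \<Omega>: "\<Omega> \<in> lmeasurable" and A: "A \<in> sets lebesgue" and f: "\<And>k. k < K \<Longrightarrow> f k \<in> Linfty \<Omega>"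
  shows "(LINT x:A\<inter>\<Omega>|lebesgue. 1 - (\<Sum>k<K. f k x)) =
    measure lebesgue (A \<inter> \<Omega>) - (\<Sum>k<K. LINT x:A\<inter>\<Omega>|lebesgue. f k x)"
proof -
  have \<Omega>s: "\<Omega> \<in> sets lebesgue" using \<Omega> by (simp add: fmeasurable_def)
  have AO: "A \<inter> \<Omega> \<in> lmeasurable" using A \<Omega> by (metis fmeasurable_Int_fmeasurable inf_commute)
  have int: "set_integrable lebesgue (A \<inter> \<Omega>) g" if "g \<in> Linfty \<Omega>" for g
    using set_integrable_subset[OF Linfty_set_integrable[OF \<Omega> that]] A \<Omega>s by auto
  have "(LINT x:A\<inter>\<Omega>|lebesgue. (\<Sum>k<K. f k x)) = (\<Sum>k<K. LINT x:A\<inter>\<Omega>|lebesgue. f k x)"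
  proof -
    have "(\<lambda>x. indicator (A \<inter> \<Omega>) x * (\<Sum>k<K. f k x)) = (\<lambda>x. \<Sum>k<K. indicator (A \<inter> \<Omega>) x * f k x)"
      by (simp add: sum_distrib_left)
    moreover have "(\<integral>x. (\<Sum>k<K. indicator (A \<inter> \<Omega>) x * f k x) \<partial>lebesgue)
        = (\<Sum>k<K. \<integral>x. indicator (A \<inter> \<Omega>) x * f k x \<partial>lebesgue)"
      using f int by (intro Bochner_Integration.integral_sum) (auto simp: set_integrable_def)
    ultimately show ?thesis unfolding set_lebesgue_integral_def by simp
  qed
  moreover have "(LINT x:A\<inter>\<Omega>|lebesgue. 1::real) = measure lebesgue (A \<inter> \<Omega>)"
    using AO by (rule set_integral_one_lmeasurable)
  moreover have "(\<lambda>x. \<Sum>k<K. f k x) \<in> Linfty \<Omega>" using f by (intro Linfty_sum \<Omega>s) auto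
  ultimately show ?thesis
    using set_integral_diff(2)[OF int[OF Linfty_const[OF \<Omega>s]] int] by simp
qed

lemma AE_sum_le_one_if_setwise_limit:
  assumes \<Omega>: "\<Omega> \<in> lmeasurable" and v: "\<And>n. v n \<in> admissible \<Omega> K"
    and uL: "\<And>k. k < K \<Longrightarrow> u k \<in> Linfty \<Omega>" and lim: "\<And>k. k < K \<Longrightarrow> setwise_tendsto \<Omega> (\<lambda>n. v n k) (u k)"
  shows "AE x in lebesgue. x \<in> \<Omega> \<longrightarrow> 0 \<le> 1 - (\<Sum>k<K. u k x)"
proof (rule AE_nonneg_if_set_integrals_nonneg)
  have \<Omega>s: "\<Omega> \<in> sets lebesgue" using \<Omega> by (simp add: fmeasurable_def)
  show "set_integrable lebesgue \<Omega> (\<lambda>x. 1 - (\<Sum>k<K. u k x))"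
    using uL by (intro Linfty_set_integrable[OF \<Omega>] Linfty_diff Linfty_const Linfty_sum \<Omega>s) auto
  have vL: "v n k \<in> Linfty \<Omega>" if "k < K" for n k
    using admissible_component(1)[OF v that] by (simp add: Linfty_01_def)
  fix A :: "R2 set" assume A: "A \<in> sets lebesgue"
  have "(LINT x:A\<inter>\<Omega>|lebesgue. 1 - (\<Sum>k<K. v n k x))
      = measure lebesgue (A \<inter> \<Omega>) - (\<Sum>k<K. LINT x:A\<inter>\<Omega>|lebesgue. v n k x)" for n
    by (rule set_integral_one_minus_sum[OF \<Omega> A]) (rule vL)
  moreover have "(LINT x:A\<inter>\<Omega>|lebesgue. 1 - (\<Sum>k<K. u k x))
      = measure lebesgue (A \<inter> \<Omega>) - (\<Sum>k<K. LINT x:A\<inter>\<Omega>|lebesgue. u k x)"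
    by (rule set_integral_one_minus_sum[OF \<Omega> A]) (rule uL)
  moreover have "(\<lambda>n. LINT x:A\<inter>\<Omega>|lebesgue. v n k x) \<longlonglongrightarrow> (LINT x:A\<inter>\<Omega>|lebesgue. u k x)" if "k < K" for k
    using lim[OF that] A unfolding setwise_tendsto_def by blast
  ultimately have "(\<lambda>n. LINT x:A\<inter>\<Omega>|lebesgue. 1 - (\<Sum>k<K. v n k x)) \<longlonglongrightarrow> (LINT x:A\<inter>\<Omega>|lebesgue. 1 - (\<Sum>k<K. u k x))"
    by (simp only:) (intro tendsto_intros; simp)
  moreover have "0 \<le> (LINT x:A\<inter>\<Omega>|lebesgue. 1 - (\<Sum>k<K. v n k x))" for n
    using v[of n] unfolding admissible_def set_lebesgue_integral_def
    by (intro Bochner_Integration.integral_nonneg_AE) (auto elim!: eventually_mono simp: indicator_def)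
  ultimately show "0 \<le> (LINT x:A\<inter>\<Omega>|lebesgue. 1 - (\<Sum>k<K. u k x))"
    by (intro LIMSEQ_le_const) auto
qed

lemma admissible_if_setwise_limit:
  assumes \<Omega>: "\<Omega> \<in> lmeasurable" and v: "\<And>n. v n \<in> admissible \<Omega> K"
    and u: "\<And>k. k < K \<Longrightarrow> u k \<in> Linfty_01 \<Omega>" and lim: "\<And>k. k < K \<Longrightarrow> setwise_tendsto \<Omega> (\<lambda>n. v n k) (u k)"
    and TV: "\<And>k. k < K \<Longrightarrow> TV \<Omega> (u k) < \<infinity>"
  shows "u \<in> admissible \<Omega> K"
proof -
  have uL: "u k \<in> Linfty \<Omega>" if "k < K" for k using u[OF that] by (simp add: Linfty_01_def)
  have "AE x in lebesgue. \<forall>k\<in>{..<K}. x \<in> \<Omega> \<longrightarrow> 0 \<le> u k x"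
  proof (intro eventually_ball_finite ballI)
    fix k assume "k \<in> {..<K}"
    then have "AE x in lebesgue. x \<in> \<Omega> \<longrightarrow> 0 \<le> u k x \<and> u k x \<le> 1"
      using u by (simp add: Linfty_01_def)
    then show "AE x in lebesgue. x \<in> \<Omega> \<longrightarrow> 0 \<le> u k x" by eventually_elim auto
  qed simp
  moreover have "AE x in lebesgue. x \<in> \<Omega> \<longrightarrow> 0 \<le> 1 - (\<Sum>k<K. u k x)"
    by (rule AE_sum_le_one_if_setwise_limit[OF \<Omega> v]) (use uL lim in auto)
  ultimately have "AE x in lebesgue. x \<in> \<Omega> \<longrightarrow> (\<forall>k<K. u k x \<ge> 0) \<and> (\<Sum>k<K. u k x) \<le> 1"
    by eventually_elim auto
  moreover have "u k \<in> BV \<Omega>" if "k < K" for k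
    using Linfty_set_integrable[OF \<Omega> uL[OF that]] TV[OF that] unfolding BV_def by simp
  ultimately show ?thesis unfolding admissible_def by blast
qed

lemma Rf_le_setwise_limit:
  assumes \<Omega>: "\<Omega> \<in> lmeasurable" "bounded \<Omega>" and lam: "lam \<ge> 0"
    and v: "\<And>n. v n \<in> admissible \<Omega> K"
    and u: "\<And>k. k < K \<Longrightarrow> u k \<in> Linfty_01 \<Omega>" and lim: "\<And>k. k < K \<Longrightarrow> setwise_tendsto \<Omega> (\<lambda>n. v n k) (u k)"
    and T: "\<And>n k. k < K \<Longrightarrow> TV \<Omega> (v n k) \<le> ereal (T n k)" "\<And>k. k < K \<Longrightarrow> (\<lambda>n. T n k) \<longlonglongrightarrow> t k"
  shows "Rf \<Omega> K \<phi> lam u \<le> ereal (lam * (\<Sum>k<K. t k) + Df \<Omega> K \<phi> u a b)"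
proof -
  have TVu: "TV \<Omega> (u k) \<le> ereal (t k)" if "k < K" for k
    using admissible_component(1)[OF v that] u[OF that] Linfty_01_subset_ball
    by (intro TV_le_lim[OF \<Omega> _ _ lim[OF that] T(1)[OF that] T(2)[OF that]]) auto
  have uA: "u \<in> admissible \<Omega> K"
    using TVu le_less_trans by (intro admissible_if_setwise_limit[OF \<Omega>(1) v u lim]) fastforce+
  have "real_of_ereal (TV \<Omega> (u k)) \<le> t k" if "k < K" for k
    using TVu[OF that] TV_nonneg[of \<Omega> "u k"] by (cases "TV \<Omega> (u k)") auto
  then have "lam * (\<Sum>k<K. real_of_ereal (TV \<Omega> (u k))) \<le> lam * (\<Sum>k<K. t k)"
    using lam by (intro mult_left_mono sum_mono) auto
  then show ?thesis
    unfolding Rf_admissible[OF uA] using Df_Inf_le[OF uA, of \<phi> a b] by simp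
qed

section \<open>Existence of a minimizer\<close>

lemma admissible_bounded_sequence_convergent_subseq:
  fixes v :: "nat \<Rightarrow> nat \<Rightarrow> R2 \<Rightarrow> real" and \<alpha> \<beta> T :: "nat \<Rightarrow> nat \<Rightarrow> real"
  assumes \<Omega>: "\<Omega> \<in> lmeasurable" and v: "\<And>n. v n \<in> admissible \<Omega> K"
    and bnd: "\<forall>f\<in>{\<alpha>, \<beta>, T}. \<forall>n. \<forall>k<K. \<bar>f n k\<bar> \<le> B"
  shows "\<exists>d u a b t. strict_mono d \<and> (\<forall>k<K. u k \<in> Linfty_01 \<Omega> \<and> setwise_tendsto \<Omega> (\<lambda>n. v (d n) k) (u k)
    \<and> (\<lambda>n. \<alpha> (d n) k) \<longlonglongrightarrow> a k \<and> (\<lambda>n. \<beta> (d n) k) \<longlonglongrightarrow> b k \<and> (\<lambda>n. T (d n) k) \<longlonglongrightarrow> t k)"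
proof -
  have "\<exists>d1 u. strict_mono d1 \<and>
      (\<forall>k\<in>{..<K}. u k \<in> Linfty_01 \<Omega> \<and> setwise_tendsto \<Omega> (\<lambda>n. v (d1 n) k) (u k))"
    using admissible_component(1)[OF v] by (intro Linfty_01_setwise_compact[OF \<Omega>]) auto
  then obtain d1 u where d1: "strict_mono d1"
    and u: "\<And>k. k < K \<Longrightarrow> u k \<in> Linfty_01 \<Omega> \<and> setwise_tendsto \<Omega> (\<lambda>n. v (d1 n) k) (u k)"
    by auto
  have "\<exists>d2. strict_mono d2 \<and> (\<forall>f\<in>{\<lambda>n. \<alpha> (d1 n), \<lambda>n. \<beta> (d1 n), \<lambda>n. T (d1 n)}.
      \<forall>k\<in>{..<K}. convergent (\<lambda>n. f (d2 n) k))"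
    using bnd by (intro bounded_families_common_convergent_subseq) auto
  then obtain d2 where d2: "strict_mono d2" and conv: "\<And>k. k < K \<Longrightarrow>
      convergent (\<lambda>n. \<alpha> (d1 (d2 n)) k) \<and> convergent (\<lambda>n. \<beta> (d1 (d2 n)) k) \<and> convergent (\<lambda>n. T (d1 (d2 n)) k)"
    by auto
  define d where "d = d1 \<circ> d2"
  show ?thesis
  proof (rule exI[of _ d], rule exI[of _ u], rule exI[of _ "\<lambda>k. lim (\<lambda>n. \<alpha> (d n) k)"],
      rule exI[of _ "\<lambda>k. lim (\<lambda>n. \<beta> (d n) k)"], rule exI[of _ "\<lambda>k. lim (\<lambda>n. T (d n) k)"],
      intro conjI allI impI)
    show "strict_mono d" unfolding d_def by (rule strict_mono_o[OF d1 d2])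
    fix k assume k: "k < K"
    show "u k \<in> Linfty_01 \<Omega>" using u[OF k] ..
    show "setwise_tendsto \<Omega> (\<lambda>n. v (d n) k) (u k)"
      using setwise_tendsto_subseq[OF conjunct2[OF u[OF k]] d2] by (simp add: d_def)
    show "(\<lambda>n. \<alpha> (d n) k) \<longlonglongrightarrow> lim (\<lambda>n. \<alpha> (d n) k)"
      "(\<lambda>n. \<beta> (d n) k) \<longlonglongrightarrow> lim (\<lambda>n. \<beta> (d n) k)"
      "(\<lambda>n. T (d n) k) \<longlonglongrightarrow> lim (\<lambda>n. T (d n) k)"
      using conv[OF k] by (simp_all add: d_def convergent_LIMSEQ_iff)
  qed
qed

lemma Rf_le_of_bounded_minimizing_sequence:
  assumes \<Omega>: "\<Omega> \<in> lmeasurable" "bounded \<Omega>" and \<phi>: "\<And>k. k < K \<Longrightarrow> \<phi> k \<in> Linfty \<Omega>" and lam: "lam > 0"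
    and v: "\<And>n. v n \<in> admissible \<Omega> K"
    and bnd: "\<And>n k. \<bar>\<alpha> n k\<bar> \<le> M" "\<And>n k. \<bar>\<beta> n k\<bar> \<le> M"
    and \<epsilon>: "\<epsilon> \<longlonglongrightarrow> 0"
    and le: "\<And>n. lam * (\<Sum>k<K. real_of_ereal (TV \<Omega> (v n k))) + Df \<Omega> K \<phi> (v n) (\<alpha> n) (\<beta> n) \<le> c + \<epsilon> n"
  shows "\<exists>u. Rf \<Omega> K \<phi> lam u \<le> ereal c"
proof -
  define T where "T n k = real_of_ereal (TV \<Omega> (v n k))" for n k
  have T_nonneg: "0 \<le> T n k" for n k unfolding T_def by (simp add: real_of_ereal_pos TV_nonneg)
  obtain E where E: "\<And>n. \<epsilon> n \<le> E"
    using convergent_imp_Bseq[OF convergentI[OF \<epsilon>]] by (auto simp: Bseq_def abs_le_iff)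
  have T_bound: "T n k \<le> (c + E) / lam" if "k < K" for n k
  proof -
    have "lam * T n k \<le> lam * (\<Sum>k<K. T n k)"
      using that T_nonneg lam by (intro mult_left_mono member_le_sum) auto
    also have "\<dots> \<le> c + E"
      using le[of n] E[of n] Df_nonneg[OF v[of n], of \<phi> "\<alpha> n" "\<beta> n"] unfolding T_def by linarith
    finally show ?thesis using lam by (simp add: field_simps mult.commute)
  qed
  have "\<bar>f n k\<bar> \<le> max M ((c + E) / lam)" if "f \<in> {\<alpha>, \<beta>, T}" "k < K" for f n k
    using that bnd[of n k] T_nonneg[of n k] T_bound[OF that(2), of n] by auto
  then have "\<forall>f\<in>{\<alpha>, \<beta>, T}. \<forall>n. \<forall>k<K. \<bar>f n k\<bar> \<le> max M ((c + E) / lam)" by blast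
  from admissible_bounded_sequence_convergent_subseq[where v=v, OF \<Omega>(1) v this]
  obtain d u a b t where d: "strict_mono d" and "\<forall>k<K.
      u k \<in> Linfty_01 \<Omega> \<and> setwise_tendsto \<Omega> (\<lambda>n. v (d n) k) (u k) \<and> (\<lambda>n. \<alpha> (d n) k) \<longlonglongrightarrow> a k
      \<and> (\<lambda>n. \<beta> (d n) k) \<longlonglongrightarrow> b k \<and> (\<lambda>n. T (d n) k) \<longlonglongrightarrow> t k"
    by blast
  note lim = this[rule_format]
  have "(\<lambda>n. lam * (\<Sum>k<K. T (d n) k) + Df \<Omega> K \<phi> (v (d n)) (\<alpha> (d n)) (\<beta> (d n)))
      \<longlonglongrightarrow> lam * (\<Sum>k<K. t k) + Df \<Omega> K \<phi> u a b"
    using admissible_component(1)[OF v] lim subsetD[OF Linfty_01_subset_ball]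
    by (intro tendsto_intros Df_tendsto[OF \<Omega>(1) \<phi>]) auto
  moreover have "(\<lambda>n. c + \<epsilon> (d n)) \<longlonglongrightarrow> c"
    using tendsto_add[OF tendsto_const[of c] LIMSEQ_subseq_LIMSEQ[OF \<epsilon> d]] by (simp add: o_def)
  ultimately have "lam * (\<Sum>k<K. t k) + Df \<Omega> K \<phi> u a b \<le> c"
    using le unfolding T_def by (intro LIMSEQ_le) auto
  moreover have "TV \<Omega> (v n k) = ereal (T n k)" if "k < K" for n k
    using admissible_component(2)[OF v that] TV_nonneg[of \<Omega> "v n k"]
    unfolding T_def by (cases "TV \<Omega> (v n k)") auto
  then have "Rf \<Omega> K \<phi> lam u \<le> ereal (lam * (\<Sum>k<K. t k) + Df \<Omega> K \<phi> u a b)"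
    using lim lam by (intro Rf_le_setwise_limit[OF \<Omega> _ v, where T="\<lambda>n. T (d n)"]) auto
  ultimately show ?thesis by (intro exI[of _ u]) (simp add: order_trans)
qed

lemma Df_clamped_below_Inf:
  assumes \<Omega>: "\<Omega> \<in> lmeasurable" and v: "v \<in> admissible \<Omega> K"
    and \<phi>: "\<And>k. k < K \<Longrightarrow> \<phi> k \<in> Linfty \<Omega>" "\<And>k. k < K \<Longrightarrow> AE x in lebesgue. x \<in> \<Omega> \<longrightarrow> \<bar>\<phi> k x\<bar> \<le> M"
    and M: "M \<ge> 0" and e: "e > 0"
  shows "\<exists>a b. (\<forall>k. \<bar>a k\<bar> \<le> M \<and> \<bar>b k\<bar> \<le> M) \<and> Df \<Omega> K \<phi> v a b < Inf {Df \<Omega> K \<phi> v a b |a b. True} + e"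
proof -
  obtain a b where ab: "Df \<Omega> K \<phi> v a b < Inf {Df \<Omega> K \<phi> v a b |a b. True} + e"
    using cInf_lessD[of "{Df \<Omega> K \<phi> v a b |a b. True}" "Inf {Df \<Omega> K \<phi> v a b |a b. True} + e"] e by auto
  have "Df \<Omega> K \<phi> v (\<lambda>k. clamp (- M) M (a k)) (\<lambda>k. clamp (- M) M (b k)) \<le> Df \<Omega> K \<phi> v a b"
    unfolding Df_def using admissible_component(1)[OF v] \<phi>
    by (intro sum_mono two_phase_integral_clamp_le[OF \<Omega>]) auto
  then show ?thesis
    using ab clamp_real_bound[OF M] by (intro exI[of _ "\<lambda>k. clamp (- M) M (a k)"] exI[of _ "\<lambda>k. clamp (- M) M (b k)"]) auto
qed

lemma Rf_Inf_finite:
  assumes "lam \<ge> 0"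
  shows "\<exists>m. Inf (range (Rf \<Omega> K \<phi> lam)) = ereal m"
proof -
  have "0 \<le> Inf (range (Rf \<Omega> K \<phi> lam))"
    using Rf_nonneg assms by (intro Inf_greatest) auto
  moreover have "Inf (range (Rf \<Omega> K \<phi> lam)) \<le> Rf \<Omega> K \<phi> lam (\<lambda>k x. 0)"
    by (rule Inf_lower) simp
  then have "Inf (range (Rf \<Omega> K \<phi> lam)) < \<infinity>"
    unfolding Rf_admissible[OF zero_admissible] by (rule le_less_trans) simp
  ultimately show ?thesis
    by (cases "Inf (range (Rf \<Omega> K \<phi> lam))") auto
qed

lemma Rf_near_Inf_with_clamped_constants:
  assumes \<Omega>: "\<Omega> \<in> lmeasurable"
    and \<phi>: "\<And>k. k < K \<Longrightarrow> \<phi> k \<in> Linfty \<Omega>" "\<And>k. k < K \<Longrightarrow> AE x in lebesgue. x \<in> \<Omega> \<longrightarrow> \<bar>\<phi> k x\<bar> \<le> M"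
    and M: "M \<ge> 0" and m: "Inf (range (Rf \<Omega> K \<phi> lam)) = ereal m" and e: "e > 0"
  shows "\<exists>v a b. v \<in> admissible \<Omega> K \<and> (\<forall>k. \<bar>a k\<bar> \<le> M \<and> \<bar>b k\<bar> \<le> M) \<and>
      lam * (\<Sum>k<K. real_of_ereal (TV \<Omega> (v k))) + Df \<Omega> K \<phi> v a b \<le> m + 2 * e"
proof -
  have "Inf (range (Rf \<Omega> K \<phi> lam)) < ereal (m + e)" using m e by simp
  then obtain v where v: "Rf \<Omega> K \<phi> lam v < ereal (m + e)"
    by (auto simp: Inf_less_iff)
  then have vA: "v \<in> admissible \<Omega> K" by (cases "v \<in> admissible \<Omega> K") (auto simp: Rf_def)
  obtain a b where "\<forall>k. \<bar>a k\<bar> \<le> M \<and> \<bar>b k\<bar> \<le> M"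
    "Df \<Omega> K \<phi> v a b < Inf {Df \<Omega> K \<phi> v a b |a b. True} + e"
    using Df_clamped_below_Inf[where \<phi>=\<phi>, OF \<Omega> vA \<phi> M e] by blast
  then show ?thesis
    using v unfolding Rf_admissible[OF vA] by (intro exI[of _ v] exI[of _ a] exI[of _ b]) (auto simp: vA)
qed

lemma Rf_has_minimizer:
  assumes \<Omega>: "\<Omega> \<in> lmeasurable" "bounded \<Omega>" and \<phi>: "\<And>k. k < K \<Longrightarrow> \<phi> k \<in> Linfty \<Omega>" and lam: "lam > 0"
  shows "\<exists>u. \<forall>v. Rf \<Omega> K \<phi> lam u \<le> Rf \<Omega> K \<phi> lam v"
proof -
  have "\<exists>M\<ge>0. \<forall>k\<in>{..<K}. AE x in lebesgue. x \<in> \<Omega> \<longrightarrow> \<bar>\<phi> k x\<bar> \<le> M"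
    using \<phi> by (intro Linfty_finite_family_bound) auto
  then obtain M where M: "M \<ge> 0" "\<And>k. k < K \<Longrightarrow> AE x in lebesgue. x \<in> \<Omega> \<longrightarrow> \<bar>\<phi> k x\<bar> \<le> M"
    by auto
  obtain m where m: "Inf (range (Rf \<Omega> K \<phi> lam)) = ereal m"
    using Rf_Inf_finite lam by fastforce
  define \<epsilon> where "\<epsilon> n = inverse (real (Suc n))" for n
  have \<epsilon>_pos: "0 < \<epsilon> n" for n unfolding \<epsilon>_def by simp
  have "\<exists>v a b. v \<in> admissible \<Omega> K \<and> (\<forall>k. \<bar>a k\<bar> \<le> M \<and> \<bar>b k\<bar> \<le> M) \<and>
      lam * (\<Sum>k<K. real_of_ereal (TV \<Omega> (v k))) + Df \<Omega> K \<phi> v a b \<le> m + 2 * \<epsilon> n" for n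
    by (rule Rf_near_Inf_with_clamped_constants[where \<phi>=\<phi>, OF \<Omega>(1) \<phi> M(2) M(1) m \<epsilon>_pos])
  then obtain v \<alpha> \<beta> where v: "\<And>n. v n \<in> admissible \<Omega> K" and bnd: "\<And>n k. \<bar>\<alpha> n k\<bar> \<le> M" "\<And>n k. \<bar>\<beta> n k\<bar> \<le> M"
    and le: "\<And>n. lam * (\<Sum>k<K. real_of_ereal (TV \<Omega> (v n k))) + Df \<Omega> K \<phi> (v n) (\<alpha> n) (\<beta> n) \<le> m + 2 * \<epsilon> n"
    by metis
  have "(\<lambda>n. 2 * \<epsilon> n) \<longlonglongrightarrow> 0"
    unfolding \<epsilon>_def using tendsto_mult_right_zero[OF LIMSEQ_inverse_real_of_nat] by simp
  then obtain u where "Rf \<Omega> K \<phi> lam u \<le> ereal m"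
    using Rf_le_of_bounded_minimizing_sequence[where \<phi>=\<phi> and v=v, OF \<Omega> \<phi> lam v bnd _ le] by blast
  moreover have "ereal m \<le> Rf \<Omega> K \<phi> lam v" for v
    unfolding m[symmetric] by (rule Inf_lower) simp
  ultimately show ?thesis
    by (meson order_trans)
qed

lemma admissible_if_Rf_minimal:
  assumes "\<forall>v. Rf \<Omega> K \<phi> lam u \<le> Rf \<Omega> K \<phi> lam v"
  shows "u \<in> admissible \<Omega> K"
proof -
  have "Rf \<Omega> K \<phi> lam u \<noteq> \<infinity>"
    using spec[OF assms, of "\<lambda>k x. 0"] unfolding Rf_admissible[OF zero_admissible] by auto
  then show ?thesis by (auto simp: Rf_def split: if_splits)
qed

lemma Ef_minimal_if_Rf_minimal:
  assumes min: "\<forall>v. Rf \<Omega> K \<phi> lam u \<le> Rf \<Omega> K \<phi> lam v"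
    and opt: "\<forall>a' b'. Df \<Omega> K \<phi> u a b \<le> Df \<Omega> K \<phi> u a' b'"
  shows "Ef \<Omega> K \<phi> lam u a b \<le> Ef \<Omega> K \<phi> lam v a' b'"
proof -
  have uA: "u \<in> admissible \<Omega> K" using min by (rule admissible_if_Rf_minimal)
  have "Inf {Df \<Omega> K \<phi> u a b |a b. True} = Df \<Omega> K \<phi> u a b"
    using opt by (intro cInf_eq_minimum) auto
  then have "Ef \<Omega> K \<phi> lam u a b = Rf \<Omega> K \<phi> lam u"
    unfolding Ef_def Rf_def using uA by simp
  moreover have "Rf \<Omega> K \<phi> lam v \<le> Ef \<Omega> K \<phi> lam v a' b'"
    unfolding Ef_def Rf_def using Df_Inf_le[of v \<Omega> K \<phi> a' b'] by (simp add: add_left_mono)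
  ultimately show ?thesis using min by (metis order_trans)
qed

theorem theorem2p1:
  fixes \<Omega> :: "R2 set" and K :: nat and \<phi> :: "nat \<Rightarrow> R2 \<Rightarrow> real" and lam :: real
  assumes "bounded_domain \<Omega>" and "lipschitz_boundary \<Omega>" and "K \<ge> 1"
    and "\<forall>k<K. \<phi> k \<in> Linfty \<Omega>" and "lam > 0"
  shows "(\<exists>u. (\<forall>k<K. u k \<in> BV \<Omega>) \<and> (\<forall>v. Rf \<Omega> K \<phi> lam u \<le> Rf \<Omega> K \<phi> lam v))
       \<and> (\<forall>u a b. (\<forall>v. Rf \<Omega> K \<phi> lam u \<le> Rf \<Omega> K \<phi> lam v)
              \<longrightarrow> (\<forall>a' b'. Df \<Omega> K \<phi> u a b \<le> Df \<Omega> K \<phi> u a' b')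
              \<longrightarrow> (\<forall>v a' b'. Ef \<Omega> K \<phi> lam u a b \<le> Ef \<Omega> K \<phi> lam v a' b'))"
proof (intro conjI allI impI)
  have \<Omega>: "\<Omega> \<in> lmeasurable" "bounded \<Omega>"
    using assms(1) unfolding bounded_domain_def by (auto simp: lmeasurable_open)
  then obtain u where min: "\<forall>v. Rf \<Omega> K \<phi> lam u \<le> Rf \<Omega> K \<phi> lam v"
    using Rf_has_minimizer assms(4,5) by blast
  then have "u \<in> admissible \<Omega> K" by (rule admissible_if_Rf_minimal)
  then show "\<exists>u. (\<forall>k<K. u k \<in> BV \<Omega>) \<and> (\<forall>v. Rf \<Omega> K \<phi> lam u \<le> Rf \<Omega> K \<phi> lam v)"
    using min unfolding admissible_def by blast
qed (rule Ef_minimal_if_Rf_minimal)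

end
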